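(* Let $K\ge1$ and $\alpha\in(0,1)$. (i) Let $(E_1,\dots,E_K)$ be arbitrarily dependent e-values (nonnegative, with $\mathbb E[E_i]\le1$ for each true null $i$), let $F_1,\dots,F_K$ be arbitrary nonnegative proxies, $\mathfrak S_E:[0,\infty)^K\to2^{[K]}$ a selection map, $\mathcal S=\mathfrak S_E(F_1,\dots,F_K)$, and $\mathcal R^{\mathrm{ePF}}$ the output of e-BH at level $\alpha$ applied to $(E_i\mathbf 1\{i\in\mathcal S\})_{i\in[K]}$. Then $\mathrm{FDR}(\mathcal R^{\mathrm{ePF}})\le\alpha$. (ii) Let $(P_1,\dots,P_K)$ be p-values, valid (superuniform) for each true null, let $Q_1,\dots,Q_K$ be arbitrary $[0,1]$-valued proxies, $\mathfrak S_P:[0,1]^K\to2^{[K]}$ a selection map, $\mathcal S=\mathfrak S_P(Q_1,\dots,Q_K)$, and $\mathcal R^{\mathrm{PF}}$ the output of BH at level $\alpha$ applied to $(P_i\vee\mathbf 1\{i\notin\mathcal S\})_{i\in[K]}$. Then $$\mathrm{FDR}(\mathcal R^{\mathrm{PF}})\le\begin{cases}\alpha(1+\log(\alpha^{-1})) & \text{if } (P_i) \text{ are independent or PRDN},\\ \alpha(3.18+\log(\alpha^{-1})) & \text{if } (P_i) \text{ are WNDN},\\ \alpha\,\ell_K & \text{under arbitrary dependence},\end{cases}$$ with $\ell_K=\sum_{k=1}^K1/k$.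
   Context: BH at level $\alpha$: with $P_{(i)}$ the $i$-th smallest input, $k=\max\{i:P_{(i)}\le\alpha i/K\}$, reject $\{i:P_i\le\alpha k/K\}$. e-BH at level $\alpha$: with $E_{[i]}$ the $i$-th largest input, $k=\max\{i:E_{[i]}\ge K/(\alpha i)\}$, reject $\{i:E_i\ge K/(\alpha k)\}$. $\mathrm{FDR}(\mathcal R)=\mathbb E[|\mathcal N\cap\mathcal R|/(|\mathcal R|\vee1)]$, $\mathcal N$ the set of true nulls. A set $D\subseteq\mathbb R^K$ is increasing if $x\in D$, $y\ge x$ componentwise imply $y\in D$. PRDN: for every increasing $D$ and $k\in\mathcal N$, $\Pr((P_1,\dots,P_K)\in D\mid P_k\le x)$ is nondecreasing in $x$. WNDN: for every $A\subseteq\mathcal N$ and $s\in[0,1]$, $\Pr(\bigcap_{i\in A}\{P_i\le s\})\le\prod_{i\in A}\Pr(P_i\le s)$. *)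

theory Defs
  imports "HOL-Probability.Probability"
begin

text \<open>Hypotheses are indexed by a finite type 'n, so K = CARD('n) \<ge> 1.\<close>

definition ith_smallest :: "('n::finite \<Rightarrow> real) \<Rightarrow> nat \<Rightarrow> real" where
  "ith_smallest p i = sorted_list_of_multiset (image_mset p (mset_set UNIV)) ! (i - 1)"

definition ith_largest :: "('n::finite \<Rightarrow> real) \<Rightarrow> nat \<Rightarrow> real" where
  "ith_largest e i = rev (sorted_list_of_multiset (image_mset e (mset_set UNIV))) ! (i - 1)"

definition BH :: "real \<Rightarrow> ('n::finite \<Rightarrow> real) \<Rightarrow> 'n set" where
  "BH \<alpha> p = (let K = CARD('n);
      k = Max ({0} \<union> {i \<in> {1..K}. ith_smallest p i \<le> \<alpha> * real i / real K})
    in if k = 0 then {} else {j. p j \<le> \<alpha> * real k / real K})"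

definition eBH :: "real \<Rightarrow> ('n::finite \<Rightarrow> real) \<Rightarrow> 'n set" where
  "eBH \<alpha> e = (let K = CARD('n);
      k = Max ({0} \<union> {i \<in> {1..K}. ith_largest e i \<ge> real K / (\<alpha> * real i)})
    in if k = 0 then {} else {j. e j \<ge> real K / (\<alpha> * real k)})"

definition FDR :: "'a measure \<Rightarrow> 'n set \<Rightarrow> ('a \<Rightarrow> 'n set) \<Rightarrow> real" where
  "FDR M N R = (\<integral>\<omega>. real (card (N \<inter> R \<omega>)) / real (max (card (R \<omega>)) 1) \<partial>M)"

definition increasing_set :: "('n \<Rightarrow> real) set \<Rightarrow> bool" where
  "increasing_set D \<longleftrightarrow> (\<forall>x y. x \<in> D \<longrightarrow> (\<forall>i. x i \<le> y i) \<longrightarrow> y \<in> D)"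

text \<open>PRDN (positive regression dependence on the subset of nulls).
  Conditional probabilities are taken where the conditioning event has positive probability.\<close>
definition PRDN :: "'a measure \<Rightarrow> 'n set \<Rightarrow> ('n \<Rightarrow> 'a \<Rightarrow> real) \<Rightarrow> bool" where
  "PRDN M N P \<longleftrightarrow>
    (\<forall>D k x y. D \<in> sets (Pi\<^sub>M UNIV (\<lambda>_. borel)) \<longrightarrow> increasing_set D \<longrightarrow> k \<in> N \<longrightarrow>
       x \<le> y \<longrightarrow> measure M {\<omega> \<in> space M. P k \<omega> \<le> x} > 0 \<longrightarrow>
       measure M {\<omega> \<in> space M. (\<lambda>i. P i \<omega>) \<in> D \<and> P k \<omega> \<le> x} / measure M {\<omega> \<in> space M. P k \<omega> \<le> x}
       \<le> measure M {\<omega> \<in> space M. (\<lambda>i. P i \<omega>) \<in> D \<and> P k \<omega> \<le> y} / measure M {\<omega> \<in> space M. P k \<omega> \<le> y})"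

definition WNDN :: "'a measure \<Rightarrow> 'n set \<Rightarrow> ('n \<Rightarrow> 'a \<Rightarrow> real) \<Rightarrow> bool" where
  "WNDN M N P \<longleftrightarrow>
    (\<forall>A s. A \<subseteq> N \<longrightarrow> 0 \<le> s \<longrightarrow> s \<le> 1 \<longrightarrow>
       measure M {\<omega> \<in> space M. \<forall>i\<in>A. P i \<omega> \<le> s} \<le> (\<Prod>i\<in>A. measure M {\<omega> \<in> space M. P i \<omega> \<le> s}))"

end

theory Submission
  imports Defs
begin

text \<open>
  For e-BH with \<open>k\<close> rejections every rejected e-value is at least \<open>K / (\<alpha> k)\<close>, so the false
  discovery proportion is at most \<open>\<alpha> / K\<close> times the sum of the null e-values; taking expectations
  gives \<open>\<alpha>\<close>. Selection only lowers e-values and does not matter.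

  Selection only raises p-values. For BH applied to any p-vector above the null p-values, the false
  discovery proportion is at most \<open>W = max\<^sub>r min 1 (V\<^sub>r / r)\<close>, where \<open>V\<^sub>r\<close> counts the nulls
  with \<open>P\<^sub>j \<le> \<alpha> r / K\<close>. Under arbitrary dependence \<open>W\<close> is dominated by a sum of
  Benjamini--Yekutieli weights of the null p-values, whose expectations give \<open>\<alpha> (\<Sum>k=1..K. 1 / k)\<close>.
  Otherwise the tail of \<open>W\<close> is bounded: \<open>Pr (W \<ge> b) \<le> \<alpha> / b\<close> under PRDN, by a telescoping
  sum over the thresholds \<open>\<alpha> r / K\<close> (independence implies PRDN by conditioning on the other
  coordinates), and \<open>Pr (W \<ge> b) \<le> \<Sum>\<^sub>k (k \<alpha> / b)\<^sup>k / k!\<close> under WNDN, by a union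
  bound over \<open>k\<close>-subsets of the nulls. Integrating \<open>min 1\<close> of these tails over \<open>b \<in> [0, 1]\<close>
  yields \<open>\<alpha> (1 + ln (1 / \<alpha>))\<close> and, splitting the integral at \<open>b = 10 \<alpha> / 3\<close>,
  \<open>\<alpha> (3.18 + ln (1 / \<alpha>))\<close>.
\<close>

section \<open>Order statistics and false discovery proportions\<close>

lemma length_filter_ge_of_sorted_wrt:
  assumes "sorted_wrt R xs" "i < length xs" "Q (xs ! i)" "\<And>x y. R x y \<Longrightarrow> Q y \<Longrightarrow> Q x"
  shows "Suc i \<le> length (filter Q xs)"
proof -
  have "Q x" if x: "x \<in> set (take (Suc i) xs)" for x
  proof -
    obtain l where "l \<le> i" "x = xs ! l"
      using x assms(2) by (auto simp: in_set_conv_nth less_Suc_eq_le)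
    then show ?thesis
      using assms by (cases "l = i") (auto simp: sorted_wrt_iff_nth_less le_less)
  qed
  then have "Suc i = length (filter Q (take (Suc i) xs))"
    using assms(2) by simp
  also have "\<dots> \<le> length (filter Q xs)"
    by (metis append_take_drop_id filter_append length_append le_add1)
  finally show ?thesis .
qed

lemma length_filter_eq_card_preimage:
  fixes p :: "'n::finite \<Rightarrow> real"
  assumes "mset xs = image_mset p (mset_set UNIV)"
  shows "length (filter Q xs) = card {j. Q (p j)}"
proof -
  have "length (filter Q xs) = size (filter_mset Q (mset xs))"
    by (metis mset_filter size_mset)
  also have "\<dots> = card {j. Q (p j)}"
    by (simp add: assms filter_mset_image_mset)
  finally show ?thesis .
qed

lemma card_le_of_ith_smallest_le:
  fixes p :: "'n::finite \<Rightarrow> real"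
  assumes "1 \<le> i" "i \<le> CARD('n)" "ith_smallest p i \<le> c"
  shows "i \<le> card {j. p j \<le> c}"
proof -
  define xs where "xs = sorted_list_of_multiset (image_mset p (mset_set (UNIV :: 'n set)))"
  have mset: "mset xs = image_mset p (mset_set UNIV)"
    by (simp add: xs_def)
  then have "length xs = CARD('n)"
    by (metis size_image_mset size_mset size_mset_set)
  then have "Suc (i - 1) \<le> length (filter (\<lambda>x. x \<le> c) xs)"
    using assms by (intro length_filter_ge_of_sorted_wrt[where R = "(\<le>)"])
      (auto simp: xs_def ith_smallest_def)
  then show ?thesis
    using assms(1) length_filter_eq_card_preimage[OF mset] by simp
qed

lemma card_ge_of_ith_largest_ge:
  fixes e :: "'n::finite \<Rightarrow> real"
  assumes "1 \<le> i" "i \<le> CARD('n)" "c \<le> ith_largest e i"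
  shows "i \<le> card {j. c \<le> e j}"
proof -
  define xs where "xs = rev (sorted_list_of_multiset (image_mset e (mset_set (UNIV :: 'n set))))"
  have mset: "mset xs = image_mset e (mset_set UNIV)"
    by (simp add: xs_def)
  then have "length xs = CARD('n)"
    by (metis size_image_mset size_mset size_mset_set)
  then have "Suc (i - 1) \<le> length (filter (\<lambda>x. c \<le> x) xs)"
    using assms by (intro length_filter_ge_of_sorted_wrt[where R = "(\<ge>)"])
      (auto simp: xs_def ith_largest_def sorted_wrt_rev)
  then show ?thesis
    using assms(1) length_filter_eq_card_preimage[OF mset] by simp
qed

lemma step_up_index:
  assumes "Max ({0::nat} \<union> {i \<in> {1..K}. Q i}) = k" "k \<noteq> 0"
  shows "k \<in> {1..K}" "Q k"
proof -
  have "k \<in> {0::nat} \<union> {i \<in> {1..K}. Q i}"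
    using Max_in[of "{0::nat} \<union> {i \<in> {1..K}. Q i}"] assms(1) by auto
  then show "k \<in> {1..K}" "Q k"
    using assms(2) by auto
qed

definition fdp :: "'n set \<Rightarrow> 'n set \<Rightarrow> real" where
  "fdp N R = real (card (N \<inter> R)) / real (max (card R) 1)"

lemma FDR_eq_integral_fdp: "FDR M N R = (\<integral>\<omega>. fdp N (R \<omega>) \<partial>M)"
  by (simp add: FDR_def fdp_def)

lemma fdp_le_card_div:
  assumes "1 \<le> k" "k \<le> card R" "finite R"
  shows "fdp N R \<le> real (card (N \<inter> R)) / real k"
  unfolding fdp_def using assms by (intro divide_left_mono) auto

lemma fdp_eBH_le:
  fixes e :: "'n::finite \<Rightarrow> real"
  assumes "0 < \<alpha>" and e_nonneg: "\<And>i. 0 \<le> e i"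
  shows "fdp N (eBH \<alpha> e) \<le> (\<Sum>j\<in>N. \<alpha> * e j / real CARD('n))"
proof -
  define K where "K = CARD('n)"
  define k where "k = Max ({0} \<union> {i \<in> {1..K}. real K / (\<alpha> * real i) \<le> ith_largest e i})"
  define R where "R = {j. real K / (\<alpha> * real k) \<le> e j}"
  have eBH: "eBH \<alpha> e = (if k = 0 then {} else R)"
    by (simp add: eBH_def K_def k_def R_def Let_def)
  have rhs_nonneg: "0 \<le> (\<Sum>j\<in>N. \<alpha> * e j / real K)"
    using assms by (intro sum_nonneg) auto
  show ?thesis
  proof (cases "k = 0")
    case True
    then show ?thesis
      using eBH rhs_nonneg by (simp add: fdp_def K_def)
  next
    case False
    note k = step_up_index[OF k_def[symmetric] False]
    have "k \<le> card R"
      using card_ge_of_ith_largest_ge k unfolding R_def K_def by auto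
    then have "fdp N R \<le> (\<Sum>j\<in>N \<inter> R. 1 / real k)"
      using fdp_le_card_div[of k R N] k by simp
    also have "\<dots> \<le> (\<Sum>j\<in>N \<inter> R. \<alpha> * e j / real K)"
      using k assms by (intro sum_mono) (auto simp: R_def field_simps)
    also have "\<dots> \<le> (\<Sum>j\<in>N. \<alpha> * e j / real K)"
      using assms by (intro sum_mono2) auto
    finally show ?thesis
      using eBH False K_def by simp
  qed
qed

lemma card_filter_eq_sum_indicator:
  assumes "finite N"
  shows "real (card {j\<in>N. Q j}) = (\<Sum>j\<in>N. if Q j then 1 else 0)"
proof -
  have "{j\<in>N. Q j} = N \<inter> Collect Q"
    by auto
  then show ?thesis
    using assms by (simp add: sum.If_cases)
qed

definition max_null_fdp :: "real \<Rightarrow> 'n set \<Rightarrow> ('n::finite \<Rightarrow> real) \<Rightarrow> real" where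
  "max_null_fdp \<alpha> N p = Max ((\<lambda>r. min 1 (real (card {j\<in>N. p j \<le> \<alpha> * real r / real CARD('n)}) / real r))
     ` {1..CARD('n)})"

lemma max_null_fdp_ge:
  fixes p :: "'n::finite \<Rightarrow> real"
  assumes "r \<in> {1..CARD('n)}"
  shows "min 1 (real (card {j\<in>N. p j \<le> \<alpha> * real r / real CARD('n)}) / real r) \<le> max_null_fdp \<alpha> N p"
  unfolding max_null_fdp_def using assms by (intro Max_ge) auto

lemma max_null_fdp_attained:
  fixes p :: "'n::finite \<Rightarrow> real"
  obtains r where "r \<in> {1..CARD('n)}"
    "max_null_fdp \<alpha> N p = min 1 (real (card {j\<in>N. p j \<le> \<alpha> * real r / real CARD('n)}) / real r)"
proof -
  have "max_null_fdp \<alpha> N p \<in> (\<lambda>r. min 1 (real (card {j\<in>N. p j \<le> \<alpha> * real r / real CARD('n)}) / real r))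
      ` {1..CARD('n)}"
    unfolding max_null_fdp_def by (intro Max_in) auto
  then show ?thesis
    using that by auto
qed

lemma max_null_fdp_nonneg:
  fixes p :: "'n::finite \<Rightarrow> real"
  shows "0 \<le> max_null_fdp \<alpha> N p"
  by (rule order_trans[OF _ max_null_fdp_ge[of 1]]) auto

lemma max_null_fdp_le_1:
  fixes p :: "'n::finite \<Rightarrow> real"
  shows "max_null_fdp \<alpha> N p \<le> 1"
proof -
  obtain r where "max_null_fdp \<alpha> N p = min 1 (real (card {j\<in>N. p j \<le> \<alpha> * real r / real CARD('n)}) / real r)"
    by (rule max_null_fdp_attained)
  then show ?thesis
    by simp
qed

lemma max_null_fdp_geD:
  fixes p :: "'n::finite \<Rightarrow> real"
  assumes "b \<le> max_null_fdp \<alpha> N p"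
  obtains r where "r \<in> {1..CARD('n)}" "b * real r \<le> real (card {j\<in>N. p j \<le> \<alpha> * real r / real CARD('n)})"
proof -
  obtain r where r: "r \<in> {1..CARD('n)}"
    "max_null_fdp \<alpha> N p = min 1 (real (card {j\<in>N. p j \<le> \<alpha> * real r / real CARD('n)}) / real r)"
    by (rule max_null_fdp_attained)
  then have "b * real r \<le> real (card {j\<in>N. p j \<le> \<alpha> * real r / real CARD('n)})"
    using assms by (simp add: field_simps)
  then show ?thesis
    using that r(1) by blast
qed

lemma borel_measurable_max_null_fdp[measurable]:
  fixes P :: "'n::finite \<Rightarrow> 'a \<Rightarrow> real"
  assumes [measurable]: "\<And>i. P i \<in> borel_measurable M"
  shows "(\<lambda>\<omega>. max_null_fdp \<alpha> N (\<lambda>j. P j \<omega>)) \<in> borel_measurable M"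
  unfolding max_null_fdp_def card_filter_eq_sum_indicator[OF finite]
  by (intro borel_measurable_Max) auto

lemma fdp_BH_le_max_null_fdp:
  fixes p P :: "'n::finite \<Rightarrow> real"
  assumes "0 < \<alpha>" and P_le_p: "\<And>i. P i \<le> p i"
  shows "fdp N (BH \<alpha> p) \<le> max_null_fdp \<alpha> N P"
proof -
  define K where "K = CARD('n)"
  define k where "k = Max ({0} \<union> {i \<in> {1..K}. ith_smallest p i \<le> \<alpha> * real i / real K})"
  define R where "R = {j. p j \<le> \<alpha> * real k / real K}"
  have BH: "BH \<alpha> p = (if k = 0 then {} else R)"
    by (simp add: BH_def K_def k_def R_def Let_def)
  show ?thesis
  proof (cases "k = 0")
    case True
    then show ?thesis
      using BH max_null_fdp_nonneg by (simp add: fdp_def)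
  next
    case False
    note k = step_up_index[OF k_def[symmetric] False]
    have "k \<le> card R"
      using card_le_of_ith_smallest_le k unfolding R_def K_def by auto
    have null_card: "card (N \<inter> R) \<le> card {j\<in>N. P j \<le> \<alpha> * real k / real K}"
      using P_le_p by (intro card_mono) (auto simp: R_def intro: order_trans)
    have "card (N \<inter> R) \<le> card R"
      by (intro card_mono) auto
    then have "fdp N R \<le> 1"
      by (simp add: fdp_def divide_le_eq_1 le_max_iff_disj)
    moreover have "fdp N R \<le> real (card (N \<inter> R)) / real k"
      using fdp_le_card_div[of k R N] \<open>k \<le> card R\<close> k by simp
    moreover have "\<dots> \<le> real (card {j\<in>N. P j \<le> \<alpha> * real k / real K}) / real k"
      using null_card by (intro divide_right_mono) auto
    ultimately have "fdp N R \<le> min 1 (real (card {j\<in>N. P j \<le> \<alpha> * real k / real K}) / real k)"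
      by (meson min.boundedI order_trans)
    also have "\<dots> \<le> max_null_fdp \<alpha> N P"
      using max_null_fdp_ge[of k N P \<alpha>] k unfolding K_def by simp
    finally show ?thesis
      using BH False by simp
  qed
qed

section \<open>From false discovery proportions to FDR\<close>

lemma (in prob_space) FDR_eBH_le:
  fixes E :: "'n::finite \<Rightarrow> 'a \<Rightarrow> real" and e :: "'a \<Rightarrow> 'n \<Rightarrow> real"
  assumes "0 < \<alpha>"
    and E_measurable: "\<And>i. E i \<in> borel_measurable M"
    and E_valid: "\<And>i. i \<in> N \<Longrightarrow> (\<integral>\<^sup>+ \<omega>. ennreal (E i \<omega>) \<partial>M) \<le> 1"
    and e_bounds: "\<And>i \<omega>. \<omega> \<in> space M \<Longrightarrow> 0 \<le> e \<omega> i \<and> e \<omega> i \<le> E i \<omega>"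
  shows "FDR M N (\<lambda>\<omega>. eBH \<alpha> (e \<omega>)) \<le> \<alpha> * real (card N) / real CARD('n)"
proof -
  define K where "K = CARD('n)"
  have E_nonneg: "0 \<le> E i \<omega>" if "\<omega> \<in> space M" for i \<omega>
    using e_bounds[OF that, of i] by linarith
  have E_integrable: "integrable M (E j)" if "j \<in> N" for j
    using E_measurable E_nonneg E_valid[OF that]
    by (intro integrableI_nonneg) (auto simp: top.not_eq_extremum intro: le_less_trans)
  have E_expectation: "expectation (E j) \<le> 1" if "j \<in> N" for j
  proof -
    have "ennreal (expectation (E j)) = (\<integral>\<^sup>+ \<omega>. ennreal (E j \<omega>) \<partial>M)"
      using E_integrable[OF that] E_nonneg by (intro nn_integral_eq_integral[symmetric]) auto
    then show ?thesis
      using E_valid[OF that] by (metis ennreal_le_1)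
  qed
  have "FDR M N (\<lambda>\<omega>. eBH \<alpha> (e \<omega>)) \<le> expectation (\<lambda>\<omega>. \<Sum>j\<in>N. \<alpha> * E j \<omega> / real K)"
    unfolding FDR_eq_integral_fdp
  proof (rule integral_mono')
    show "integrable M (\<lambda>\<omega>. \<Sum>j\<in>N. \<alpha> * E j \<omega> / real K)"
      using E_integrable by (intro Bochner_Integration.integrable_sum integrable_divide integrable_mult_right) auto
    fix \<omega> assume \<omega>: "\<omega> \<in> space M"
    have "fdp N (eBH \<alpha> (e \<omega>)) \<le> (\<Sum>j\<in>N. \<alpha> * e \<omega> j / real K)"
      unfolding K_def using assms(1) e_bounds[OF \<omega>] by (intro fdp_eBH_le) auto
    also have "\<dots> \<le> (\<Sum>j\<in>N. \<alpha> * E j \<omega> / real K)"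
      using assms(1) e_bounds[OF \<omega>] by (intro sum_mono divide_right_mono mult_left_mono) auto
    finally show "fdp N (eBH \<alpha> (e \<omega>)) \<le> (\<Sum>j\<in>N. \<alpha> * E j \<omega> / real K)" .
    show "0 \<le> (\<Sum>j\<in>N. \<alpha> * E j \<omega> / real K)"
      using assms(1) E_nonneg[OF \<omega>] by (intro sum_nonneg) auto
  qed
  also have "\<dots> = (\<Sum>j\<in>N. \<alpha> / real K * expectation (E j))"
    using E_integrable by (subst Bochner_Integration.integral_sum) (auto simp: field_simps)
  also have "\<dots> \<le> (\<Sum>j\<in>N. \<alpha> / real K * 1)"
    using E_expectation assms(1) by (intro sum_mono mult_left_mono) auto
  finally show ?thesis
    by (simp add: K_def mult.commute)
qed

lemma (in prob_space) FDR_BH_le_expectation_max_null_fdp: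
  fixes P :: "'n::finite \<Rightarrow> 'a \<Rightarrow> real" and p :: "'a \<Rightarrow> 'n \<Rightarrow> real"
  assumes "0 < \<alpha>" and [measurable]: "\<And>i. P i \<in> borel_measurable M"
    and P_le_p: "\<And>i \<omega>. \<omega> \<in> space M \<Longrightarrow> P i \<omega> \<le> p \<omega> i"
  shows "FDR M N (\<lambda>\<omega>. BH \<alpha> (p \<omega>)) \<le> expectation (\<lambda>\<omega>. max_null_fdp \<alpha> N (\<lambda>j. P j \<omega>))"
  unfolding FDR_eq_integral_fdp
proof (rule integral_mono')
  show "integrable M (\<lambda>\<omega>. max_null_fdp \<alpha> N (\<lambda>j. P j \<omega>))"
    by (intro integrable_const_bound[where B = 1]) (auto simp: max_null_fdp_nonneg max_null_fdp_le_1)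
  show "fdp N (BH \<alpha> (p \<omega>)) \<le> max_null_fdp \<alpha> N (\<lambda>j. P j \<omega>)" if "\<omega> \<in> space M" for \<omega>
    using assms(1) P_le_p[OF that] by (rule fdp_BH_le_max_null_fdp)
qed (rule max_null_fdp_nonneg)

section \<open>Expectations from tail bounds\<close>

lemma le_staircase_bound:
  fixes w :: real
  assumes "0 \<le> w" "w \<le> 1" "0 < m"
  shows "w \<le> 1 / real m + (\<Sum>i<m. (if real (Suc i) / real m \<le> w then 1 else 0) / real m)"
proof -
  have levels: "{i\<in>{..<m}. real (Suc i) / real m \<le> w} = {..<nat \<lfloor>real m * w\<rfloor>}"
  proof -
    have iff: "real (Suc i) / real m \<le> w \<longleftrightarrow> real (Suc i) \<le> real m * w" for i
      using assms(3) by (simp add: field_simps)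
    have "real m * w \<le> real m"
      using assms by (simp add: mult_left_le)
    then show ?thesis
      unfolding iff using assms by (safe; linarith)
  qed
  have "real m * w - 1 \<le> real (card {i\<in>{..<m}. real (Suc i) / real m \<le> w})"
    unfolding levels using assms of_nat_floor[of "real m * w"] by (simp; linarith)
  also have "\<dots> = (\<Sum>i<m. if real (Suc i) / real m \<le> w then 1 else 0)"
    by (rule card_filter_eq_sum_indicator) simp
  finally show ?thesis
    using assms(3) by (simp add: sum_divide_distrib[symmetric] field_simps)
qed

lemma (in prob_space) expectation_indicator_event:
  assumes "{\<omega>\<in>space M. Q \<omega>} \<in> events"
  shows "integrable M (\<lambda>\<omega>. if Q \<omega> then 1 else 0 :: real)"
    and "expectation (\<lambda>\<omega>. if Q \<omega> then 1 else 0 :: real) = prob {\<omega>\<in>space M. Q \<omega>}"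
proof -
  have indicator: "(if Q \<omega> then 1 else 0 :: real) = indicator {\<omega>\<in>space M. Q \<omega>} \<omega>" if "\<omega> \<in> space M" for \<omega>
    using that by (simp add: indicator_def)
  show "integrable M (\<lambda>\<omega>. if Q \<omega> then 1 else 0 :: real)"
    using assms by (subst Bochner_Integration.integrable_cong[OF refl indicator]) (auto simp: less_top[symmetric])
  show "expectation (\<lambda>\<omega>. if Q \<omega> then 1 else 0 :: real) = prob {\<omega>\<in>space M. Q \<omega>}"
    using assms by (subst Bochner_Integration.integral_cong[OF refl indicator]) auto
qed

lemma (in prob_space) expectation_le_of_tail_increments:
  fixes W :: "'a \<Rightarrow> real" and H :: "real \<Rightarrow> real"
  assumes [measurable]: "W \<in> borel_measurable M"
    and W_bounds: "\<And>\<omega>. \<omega> \<in> space M \<Longrightarrow> 0 \<le> W \<omega> \<and> W \<omega> \<le> 1"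
    and increments: "\<And>a b. 0 \<le> a \<Longrightarrow> a < b \<Longrightarrow> b \<le> 1 \<Longrightarrow> (b - a) * prob {\<omega>\<in>space M. b \<le> W \<omega>} \<le> H b - H a"
  shows "expectation W \<le> H 1 - H 0"
proof (rule field_le_epsilon)
  fix \<epsilon> :: real
  assume "0 < \<epsilon>"
  then obtain m :: nat where m: "1 / \<epsilon> < real m" "0 < m"
    by (metis reals_Archimedean2 divide_pos_pos less_trans of_nat_0_less_iff zero_less_one)
  define level where "level i = (\<lambda>\<omega>. if real (Suc i) / real m \<le> W \<omega> then 1 else 0 :: real)" for i
  have level_event: "{\<omega>\<in>space M. real (Suc i) / real m \<le> W \<omega>} \<in> events" for i
    by measurable
  note level_integrable = expectation_indicator_event(1)[OF level_event, folded level_def]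
  note level_expectation = expectation_indicator_event(2)[OF level_event, folded level_def]
  have "expectation W \<le> expectation (\<lambda>\<omega>. 1 / real m + (\<Sum>i<m. level i \<omega> / real m))"
  proof (rule integral_mono')
    show "integrable M (\<lambda>\<omega>. 1 / real m + (\<Sum>i<m. level i \<omega> / real m))"
      using level_integrable by (intro Bochner_Integration.integrable_add Bochner_Integration.integrable_sum integrable_divide) auto
    show "W \<omega> \<le> 1 / real m + (\<Sum>i<m. level i \<omega> / real m)" if "\<omega> \<in> space M" for \<omega>
      unfolding level_def using W_bounds[OF that] m(2) by (intro le_staircase_bound) auto
  qed (auto simp: level_def intro!: add_nonneg_nonneg sum_nonneg)
  also have "\<dots> = 1 / real m + (\<Sum>i<m. expectation (level i) / real m)"
    using level_integrable
    by (subst Bochner_Integration.integral_add)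
      (auto simp: prob_space Bochner_Integration.integral_sum intro!: Bochner_Integration.integrable_sum)
  also have "\<dots> \<le> 1 / real m + (\<Sum>i<m. H (real (Suc i) / real m) - H (real i / real m))"
  proof (intro add_left_mono sum_mono)
    fix i assume "i \<in> {..<m}"
    have "expectation (level i) / real m
        = (real (Suc i) / real m - real i / real m) * prob {\<omega>\<in>space M. real (Suc i) / real m \<le> W \<omega>}"
      unfolding level_expectation using m by (simp add: field_simps)
    also have "\<dots> \<le> H (real (Suc i) / real m) - H (real i / real m)"
      using m \<open>i \<in> {..<m}\<close> by (intro increments) (auto simp: field_simps)
    finally show "expectation (level i) / real m \<le> H (real (Suc i) / real m) - H (real i / real m)" .
  qed
  also have "\<dots> = 1 / real m + (H 1 - H 0)"
    using sum_lessThan_telescope[of "\<lambda>i. H (real i / real m)" m] m by simp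
  also have "\<dots> \<le> H 1 - H 0 + \<epsilon>"
    using m \<open>0 < \<epsilon>\<close> by (simp add: field_simps)
  finally show "expectation W \<le> H 1 - H 0 + \<epsilon>" .
qed

definition tail_bound :: "nat \<Rightarrow> real \<Rightarrow> real" where
  "tail_bound K x = (\<Sum>k=1..K. (real k / x) ^ k / fact k)"

definition tail_coeff :: "nat \<Rightarrow> real" where
  "tail_coeff k = real k ^ k / (fact k * real (k - 1))"

lemma tail_coeff_nonneg: "0 \<le> tail_coeff k"
  by (simp add: tail_coeff_def)

text \<open>Below \<open>x0\<close> a primitive of \<open>1\<close>, above \<open>x0\<close> a primitive of the decreasing function
  \<open>tail_bound K\<close>, glued continuously at \<open>x0\<close>.\<close>

definition tail_primitive :: "real \<Rightarrow> nat \<Rightarrow> real \<Rightarrow> real" where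
  "tail_primitive x0 K x = (if x \<le> x0 then x else
     x0 + ln (x / x0) + (\<Sum>k=2..K. tail_coeff k * (1 / x0 ^ (k - 1) - 1 / x ^ (k - 1))))"

lemma diff_div_le_ln_div:
  fixes a b :: real
  assumes "0 < a" "a \<le> b"
  shows "(b - a) / b \<le> ln (b / a)"
proof -
  have "ln (a / b) \<le> a / b - 1"
    using assms by (intro ln_le_minus_one) simp
  moreover have "ln (b / a) = - ln (a / b)"
    using assms by (simp add: ln_div)
  ultimately show ?thesis
    using assms by (simp add: diff_divide_distrib)
qed

lemma inverse_power_diff_ge:
  fixes a b :: real
  assumes "0 < a" "a \<le> b"
  shows "real j * (b - a) / b ^ (j + 1) \<le> 1 / a ^ j - 1 / b ^ j"
proof -
  have "1 + real j * (b / a - 1) \<le> (1 + (b / a - 1)) ^ j"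
    using assms by (intro Bernoulli_inequality) (simp add: field_simps)
  then have Bernoulli: "1 + real j * (b - a) / a \<le> (b / a) ^ j"
    using assms by (simp add: field_simps)
  have "real j * (b - a) / b ^ (j + 1) = (real j * (b - a) / b) / b ^ j"
    by (simp add: field_simps)
  also have "\<dots> \<le> (real j * (b - a) / a) / b ^ j"
    using assms by (intro divide_right_mono divide_left_mono mult_nonneg_nonneg) auto
  also have "\<dots> \<le> ((b / a) ^ j - 1) / b ^ j"
    using Bernoulli assms by (intro divide_right_mono) auto
  also have "\<dots> = 1 / a ^ j - 1 / b ^ j"
    using assms by (simp add: field_simps power_divide)
  finally show ?thesis .
qed

lemma diff_mult_tail_bound_le:
  fixes a b :: real
  assumes "0 < a" "a \<le> b"
  shows "(b - a) * tail_bound K b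
    \<le> ln (b / a) + (\<Sum>k=2..K. tail_coeff k * (1 / a ^ (k - 1) - 1 / b ^ (k - 1)))"
proof -
  have term_le: "(b - a) * ((real k / b) ^ k / fact k)
      \<le> tail_coeff k * (1 / a ^ (k - 1) - 1 / b ^ (k - 1))" if "2 \<le> k" for k
  proof -
    have "(b - a) * ((real k / b) ^ k / fact k)
        = tail_coeff k * (real (k - 1) * (b - a) / b ^ (k - 1 + 1))"
      using that assms by (simp add: tail_coeff_def field_simps power_divide)
    also have "\<dots> \<le> tail_coeff k * (1 / a ^ (k - 1) - 1 / b ^ (k - 1))"
      using inverse_power_diff_ge[OF assms] by (intro mult_left_mono tail_coeff_nonneg) auto
    finally show ?thesis .
  qed
  show ?thesis
  proof (cases "K = 0")
    case True
    then show ?thesis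
      using assms by (simp add: tail_bound_def)
  next
    case False
    then have "(b - a) * tail_bound K b = (b - a) / b + (\<Sum>k=2..K. (b - a) * ((real k / b) ^ k / fact k))"
      unfolding tail_bound_def
      by (subst sum.atLeast_Suc_atMost) (auto simp: numeral_2_eq_2 distrib_left sum_distrib_left)
    also have "\<dots> \<le> ln (b / a) + (\<Sum>k=2..K. tail_coeff k * (1 / a ^ (k - 1) - 1 / b ^ (k - 1)))"
      using diff_div_le_ln_div[OF assms] term_le by (intro add_mono sum_mono) auto
    finally show ?thesis .
  qed
qed

lemma tail_primitive_increment:
  fixes a b x0 :: real
  assumes "0 < x0" "0 \<le> a" "a < b"
  shows "(b - a) * min 1 (tail_bound K b) \<le> tail_primitive x0 K b - tail_primitive x0 K a"
proof -
  consider "b \<le> x0" | "a \<le> x0" "x0 < b" | "x0 < a"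
    using assms by linarith
  then show ?thesis
  proof cases
    case 1
    then show ?thesis
      using assms by (simp add: tail_primitive_def mult_left_le min_def)
  next
    case 2
    have "(b - a) * min 1 (tail_bound K b) = (b - x0) * min 1 (tail_bound K b) + (x0 - a) * min 1 (tail_bound K b)"
      by (simp add: algebra_simps)
    also have "\<dots> \<le> (b - x0) * tail_bound K b + (x0 - a) * 1"
      using 2 by (intro add_mono mult_left_mono) auto
    also have "\<dots> \<le> tail_primitive x0 K b - tail_primitive x0 K a"
      using diff_mult_tail_bound_le[of x0 b K] 2 assms by (simp add: tail_primitive_def)
    finally show ?thesis .
  next
    case 3
    have "ln (b / x0) - ln (a / x0) = ln (b / a)"
      using 3 assms by (simp add: ln_div)
    moreover have "(\<Sum>k=2..K. tail_coeff k * (1 / x0 ^ (k - 1) - 1 / b ^ (k - 1)))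
        - (\<Sum>k=2..K. tail_coeff k * (1 / x0 ^ (k - 1) - 1 / a ^ (k - 1)))
        = (\<Sum>k=2..K. tail_coeff k * (1 / a ^ (k - 1) - 1 / b ^ (k - 1)))"
      by (simp add: sum_subtractf[symmetric] algebra_simps)
    ultimately have increment: "tail_primitive x0 K b - tail_primitive x0 K a
        = ln (b / a) + (\<Sum>k=2..K. tail_coeff k * (1 / a ^ (k - 1) - 1 / b ^ (k - 1)))"
      using 3 assms by (simp add: tail_primitive_def)
    have "(b - a) * min 1 (tail_bound K b) \<le> (b - a) * tail_bound K b"
      using assms by (intro mult_left_mono) auto
    also have "\<dots> \<le> ln (b / a) + (\<Sum>k=2..K. tail_coeff k * (1 / a ^ (k - 1) - 1 / b ^ (k - 1)))"
      using diff_mult_tail_bound_le[of a b K] 3 assms by simp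
    finally show ?thesis
      unfolding increment .
  qed
qed

lemma (in prob_space) expectation_le_tail_primitive:
  fixes W :: "'a \<Rightarrow> real"
  assumes "W \<in> borel_measurable M" and W_bounds: "\<And>\<omega>. \<omega> \<in> space M \<Longrightarrow> 0 \<le> W \<omega> \<and> W \<omega> \<le> 1"
    and tail: "\<And>b. 0 < b \<Longrightarrow> b \<le> 1 \<Longrightarrow> prob {\<omega>\<in>space M. b \<le> W \<omega>} \<le> tail_bound K (b / \<alpha>)"
    and "0 < \<alpha>" "0 < x0"
  shows "expectation W \<le> \<alpha> * tail_primitive x0 K (1 / \<alpha>)"
proof -
  define H where "H w = \<alpha> * tail_primitive x0 K (w / \<alpha>)" for w
  have "expectation W \<le> H 1 - H 0"
  proof (rule expectation_le_of_tail_increments[OF assms(1) W_bounds])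
    fix a b :: real
    assume ab: "0 \<le> a" "a < b" "b \<le> 1"
    have "(b - a) * prob {\<omega>\<in>space M. b \<le> W \<omega>} \<le> (b - a) * min 1 (tail_bound K (b / \<alpha>))"
      using tail[of b] ab by (intro mult_left_mono) auto
    also have "\<dots> = \<alpha> * ((b / \<alpha> - a / \<alpha>) * min 1 (tail_bound K (b / \<alpha>)))"
      using assms(4) by (simp add: field_simps)
    also have "\<dots> \<le> \<alpha> * (tail_primitive x0 K (b / \<alpha>) - tail_primitive x0 K (a / \<alpha>))"
      using assms(4,5) ab by (intro mult_left_mono tail_primitive_increment) (auto simp: divide_strict_right_mono)
    finally show "(b - a) * prob {\<omega>\<in>space M. b \<le> W \<omega>} \<le> H b - H a"
      by (simp add: H_def algebra_simps)
  qed auto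
  then show ?thesis
    using assms(5) by (simp add: H_def tail_primitive_def)
qed

section \<open>The constant 3.18\<close>

lemma ln_10_div_3_ge: "12035 / 10000 \<le> ln (10 / 3 :: real)"
proof -
  define g where "g n = (7 / 10 :: real) ^ (n + 1) * (1 / real (n + 1))" for n
  have g_nonneg: "0 \<le> g n" for n
    unfolding g_def by simp
  have summable: "summable g"
  proof (rule summable_comparison_test'[where g = "\<lambda>n. (7 / 10 :: real) ^ n"])
    show "summable (\<lambda>n. (7 / 10 :: real) ^ n)"
      by (rule summable_geometric) simp
    fix n
    have "g n \<le> (7 / 10) ^ (n + 1) * 1"
      unfolding g_def by (intro mult_left_mono) auto
    also have "\<dots> \<le> (7 / 10) ^ n"
      by (simp add: power_Suc2)
    finally show "norm (g n) \<le> (7 / 10) ^ n"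
      using g_nonneg[of n] by simp
  qed
  have "ln (3 / 10 :: real) = (\<Sum>n. (- 1) ^ n * (1 / real (n + 1)) * (3 / 10 - 1) ^ Suc n)"
    by (rule ln_series) auto
  also have "(\<lambda>n. (- 1) ^ n * (1 / real (n + 1)) * (3 / 10 - 1 :: real) ^ Suc n) = (\<lambda>n. - g n)"
  proof
    fix n
    have "(3 / 10 - 1 :: real) = - 1 * (7 / 10)"
      by simp
    then have "(3 / 10 - 1 :: real) ^ Suc n = - ((- 1) ^ n * (7 / 10) ^ Suc n)"
      by (simp only: power_mult_distrib power_Suc)
    moreover have "(- 1 :: real) ^ n * (- 1) ^ n = 1"
      by (simp flip: power_mult_distrib)
    ultimately show "(- 1) ^ n * (1 / real (n + 1)) * (3 / 10 - 1 :: real) ^ Suc n = - g n"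
      unfolding g_def by (simp add: algebra_simps)
  qed
  also have "(\<Sum>n. - g n) = - (\<Sum>n. g n)"
    using summable by (rule suminf_minus)
  finally have ln_eq: "ln (10 / 3 :: real) = (\<Sum>n. g n)"
    by (simp add: ln_div)
  have "12035 / 10000 \<le> (\<Sum>n\<in>{0..15}. g n)"
    unfolding g_def by (simp add: sum.atLeast_Suc_atMost power_divide)
  also have "\<dots> \<le> (\<Sum>n. g n)"
    using summable g_nonneg by (intro sum_le_suminf) auto
  finally show ?thesis
    unfolding ln_eq .
qed

lemma power_self_div_fact_le_exp_power:
  assumes "1 \<le> k"
  shows "real k ^ k / fact k \<le> exp 1 ^ (k - 1)"
  using assms
proof (induction k rule: dec_induct)
  case (step k)
  have "(1 + 1 / real k) ^ k \<le> exp (1 / real k) ^ k"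
    by (intro power_mono) (auto simp: add_nonneg_nonneg)
  also have "\<dots> = exp 1"
    using step by (simp flip: exp_of_nat_mult)
  finally have e: "(1 + 1 / real k) ^ k \<le> exp 1" .
  have "real (Suc k) ^ Suc k / fact (Suc k) = real (Suc k) ^ k / fact k"
    unfolding fact_Suc power_Suc by (rule mult_divide_mult_cancel_left) simp
  also have "\<dots> = (real k ^ k / fact k) * (1 + 1 / real k) ^ k"
  proof -
    have "real (Suc k) = real k * (1 + 1 / real k)"
      using step by (simp add: field_simps)
    then show ?thesis
      by (simp add: power_mult_distrib)
  qed
  also have "\<dots> \<le> exp 1 ^ (k - 1) * exp 1"
    using step.IH e by (intro mult_mono) auto
  also have "\<dots> = exp 1 ^ (Suc k - 1)"
    using step by (cases k) auto
  finally show ?case .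
qed simp

lemma sum_power_pred_geometric:
  fixes q :: real
  assumes "q \<noteq> 1"
  shows "(\<Sum>k=Suc m..m + n. q ^ (k - 1)) = (q ^ m - q ^ (m + n)) / (1 - q)"
proof (induction n)
  case (Suc n)
  have "(\<Sum>k=Suc m..m + Suc n. q ^ (k - 1)) = (\<Sum>k=Suc m..m + n. q ^ (k - 1)) + q ^ (m + n)"
    by simp
  also have "\<dots> = (q ^ m - q ^ (m + n)) / (1 - q) + q ^ (m + n)"
    using Suc by simp
  also have "\<dots> = (q ^ m - q ^ (m + Suc n)) / (1 - q)"
    using assms by (simp add: field_simps)
  finally show ?case .
qed simp

lemma tail_coeff_power_le:
  assumes "26 \<le> k"
  shows "tail_coeff k * (3 / 10) ^ (k - 1) \<le> (816 / 1000) ^ (k - 1) / 25"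
proof -
  have "tail_coeff k * (3 / 10) ^ (k - 1) = (real k ^ k / fact k) * (3 / 10) ^ (k - 1) / real (k - 1)"
    by (simp add: tail_coeff_def field_simps)
  also have "\<dots> \<le> exp 1 ^ (k - 1) * (3 / 10) ^ (k - 1) / real (k - 1)"
    using power_self_div_fact_le_exp_power[of k] assms by (intro divide_right_mono mult_right_mono) auto
  also have "\<dots> = (exp 1 * (3 / 10)) ^ (k - 1) / real (k - 1)"
    by (simp only: power_mult_distrib)
  also have "\<dots> \<le> (816 / 1000) ^ (k - 1) / real (k - 1)"
    using e_less_272 by (intro divide_right_mono power_mono) auto
  also have "\<dots> \<le> (816 / 1000) ^ (k - 1) / 25"
    using assms by (intro divide_left_mono) auto
  finally show ?thesis .
qed

lemma sum_tail_coeff_power_le: "(\<Sum>k=2..K. tail_coeff k * (3 / 10) ^ (k - 1)) \<le> 104697 / 100000"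
proof -
  have head: "(\<Sum>k=2..25. tail_coeff k * (3 / 10) ^ (k - 1)) \<le> 104562 / 100000"
    unfolding tail_coeff_def by (simp add: sum.atLeast_Suc_atMost fact_numeral power_divide)
  show ?thesis
  proof (cases "K \<le> 25")
    case True
    then have "(\<Sum>k=2..K. tail_coeff k * (3 / 10) ^ (k - 1)) \<le> (\<Sum>k=2..25. tail_coeff k * (3 / 10) ^ (k - 1))"
      by (intro sum_mono2) (auto simp: tail_coeff_nonneg)
    then show ?thesis
      using head by simp
  next
    case False
    then obtain n where n: "K = 25 + n"
      by (metis le_add_diff_inverse nat_le_linear)
    have "{2..K} = {2..25} \<union> {Suc 25..25 + n}"
      using n by auto
    then have "(\<Sum>k=2..K. tail_coeff k * (3 / 10) ^ (k - 1))
        = (\<Sum>k=2..25. tail_coeff k * (3 / 10) ^ (k - 1)) + (\<Sum>k=Suc 25..25 + n. tail_coeff k * (3 / 10) ^ (k - 1))"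
      by (simp add: sum.union_disjoint)
    also have "(\<Sum>k=Suc 25..25 + n. tail_coeff k * (3 / 10) ^ (k - 1)) \<le> (\<Sum>k=Suc 25..25 + n. (816 / 1000) ^ (k - 1)) / 25"
      unfolding sum_divide_distrib by (intro sum_mono tail_coeff_power_le) auto
    also have "\<dots> = ((816 / 1000) ^ 25 - (816 / 1000) ^ (25 + n)) / (1 - 816 / 1000) / 25"
      using sum_power_pred_geometric[of "816 / 1000" 25 n] by simp
    also have "\<dots> \<le> (816 / 1000) ^ 25 / (1 - 816 / 1000) / 25"
      by (intro divide_right_mono) auto
    also have "\<dots> \<le> 135 / 100000"
      by (simp add: power_divide)
    finally show ?thesis
      using head by simp
  qed
qed

text \<open>The cut-off \<open>10 / 3\<close> nearly minimises \<open>x0 - ln x0 + (\<Sum>k\<ge>2. tail_coeff k / x0 ^ (k - 1))\<close>,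
  whose value there, about \<open>3.177\<close>, is the constant.\<close>

lemma tail_primitive_10_div_3_le:
  assumes "1 < X"
  shows "tail_primitive (10 / 3) K X \<le> 318 / 100 + ln X"
proof (cases "X \<le> 10 / 3")
  case True
  have "X \<le> 318 / 100 + ln X"
  proof (cases "X \<le> 318 / 100")
    case False
    have "1 - 1 / X \<le> ln X"
      using ln_le_minus_one[of "1 / X"] assms by (simp add: ln_div)
    moreover have "1 / X \<le> 1 / (318 / 100)"
      using False by (intro divide_left_mono) auto
    ultimately show ?thesis
      using True by simp
  qed (use ln_gt_zero[OF assms] in linarith)
  then show ?thesis
    using True by (simp add: tail_primitive_def)
next
  case False
  have "(\<Sum>k=2..K. tail_coeff k * (1 / (10 / 3) ^ (k - 1) - 1 / X ^ (k - 1)))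
      \<le> (\<Sum>k=2..K. tail_coeff k * (3 / 10) ^ (k - 1))"
    using assms by (intro sum_mono mult_left_mono tail_coeff_nonneg) (auto simp: power_divide)
  moreover have "ln (X / (10 / 3)) = ln X - ln (10 / 3)"
    using assms by (intro ln_divide_pos) auto
  ultimately show ?thesis
    using False ln_10_div_3_ge sum_tail_coeff_power_le[of K] by (simp add: tail_primitive_def)
qed

section \<open>Arbitrary dependence\<close>

definition BY_weight :: "nat \<Rightarrow> real \<Rightarrow> real \<Rightarrow> real" where
  "BY_weight K \<alpha> x = (\<Sum>s=1..K. (1 / real s - 1 / real (s + 1)) * (if x \<le> \<alpha> * real s / real K then 1 else 0))
     + 1 / real (K + 1) * (if x \<le> \<alpha> then 1 else 0)"

lemma BY_weight_nonneg: "0 \<le> BY_weight K \<alpha> x"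
  unfolding BY_weight_def by (intro add_nonneg_nonneg sum_nonneg) (auto simp: field_simps)

lemma BY_weight_ge:
  assumes r: "1 \<le> r" "r \<le> K" and "0 < \<alpha>"
  shows "(if x \<le> \<alpha> * real r / real K then 1 else 0) / real r \<le> BY_weight K \<alpha> x"
proof (cases "x \<le> \<alpha> * real r / real K")
  case False
  then show ?thesis
    using BY_weight_nonneg by simp
next
  case True
  have "(\<Sum>s=r..K. 1 / real s - 1 / real (s + 1)) = - (\<Sum>s=r..<Suc K. 1 / real (Suc s) - 1 / real s)"
    by (simp add: atLeastLessThanSuc_atLeastAtMost sum_negf[symmetric])
  also have "\<dots> = 1 / real r - 1 / real (K + 1)"
    using r by (subst sum_Suc_diff') auto
  finally have telescope: "(\<Sum>s=r..K. 1 / real s - 1 / real (s + 1)) = 1 / real r - 1 / real (K + 1)" .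
  have "x \<le> \<alpha> * real s / real K" if "s \<in> {r..K}" for s
  proof -
    have "\<alpha> * real r / real K \<le> \<alpha> * real s / real K"
      using that assms by (intro divide_right_mono mult_left_mono) auto
    then show ?thesis
      using True by linarith
  qed
  then have "1 / real r - 1 / real (K + 1)
      = (\<Sum>s=r..K. (1 / real s - 1 / real (s + 1)) * (if x \<le> \<alpha> * real s / real K then 1 else 0))"
    unfolding telescope[symmetric] by (intro sum.cong) auto
  also have "\<dots> \<le> (\<Sum>s=1..K. (1 / real s - 1 / real (s + 1)) * (if x \<le> \<alpha> * real s / real K then 1 else 0))"
    using r by (intro sum_mono2) (auto simp: field_simps)
  finally have "1 / real r - 1 / real (K + 1) \<le> \<dots>" .
  moreover have "x \<le> \<alpha>"
  proof -
    have "\<alpha> * real r / real K \<le> \<alpha>"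
      using r assms(3) by (simp add: field_simps)
    then show ?thesis
      using True by linarith
  qed
  ultimately show ?thesis
    using True unfolding BY_weight_def by simp
qed

lemma harmonic_shift_identity:
  "(\<Sum>s=1..K. 1 / real (s + 1)) + real K / real (K + 1) = (\<Sum>s=1..K. 1 / real s)"
proof (induction K)
  case (Suc K)
  have "1 / real (Suc K + 1) + real (Suc K) / real (Suc K + 1) - real K / real (K + 1) = 1 / real (Suc K)"
    by (simp add: field_simps)
  then show ?case
    using Suc by simp
qed simp

lemma BY_threshold_sum_eq:
  assumes "0 < K"
  shows "(\<Sum>s=1..K. (1 / real s - 1 / real (s + 1)) * (\<alpha> * real s / real K)) + 1 / real (K + 1) * \<alpha>
    = \<alpha> / real K * (\<Sum>s=1..K. 1 / real s)"
proof -
  have "(1 / real s - 1 / real (s + 1)) * (\<alpha> * real s / real K) = \<alpha> / real K * (1 / real (s + 1))"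
    if "s \<in> {1..K}" for s
  proof -
    have "(1 / real s - 1 / real (s + 1)) * (\<alpha> * real s / real K)
        = \<alpha> / real K * (real s * (1 / real s - 1 / real (s + 1)))"
      by (simp add: algebra_simps)
    also have "real s * (1 / real s - 1 / real (s + 1)) = 1 / real (s + 1)"
      using that by (simp add: right_diff_distrib) (simp add: field_simps)
    finally show ?thesis .
  qed
  then have "(\<Sum>s=1..K. (1 / real s - 1 / real (s + 1)) * (\<alpha> * real s / real K)) + 1 / real (K + 1) * \<alpha>
      = \<alpha> / real K * ((\<Sum>s=1..K. 1 / real (s + 1)) + real K / real (K + 1))"
    using assms by (simp add: sum_distrib_left distrib_left)
  then show ?thesis
    by (simp only: harmonic_shift_identity)
qed

lemma (in prob_space) expectation_BY_weight_le:
  fixes X :: "'a \<Rightarrow> real"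
  assumes [measurable]: "X \<in> borel_measurable M"
    and superuniform: "\<And>t. 0 \<le> t \<Longrightarrow> t \<le> 1 \<Longrightarrow> prob {\<omega>\<in>space M. X \<omega> \<le> t} \<le> t"
    and "0 < \<alpha>" "\<alpha> < 1" "0 < K"
  shows "integrable M (\<lambda>\<omega>. BY_weight K \<alpha> (X \<omega>))"
    and "expectation (\<lambda>\<omega>. BY_weight K \<alpha> (X \<omega>)) \<le> \<alpha> / real K * (\<Sum>s=1..K. 1 / real s)"
proof -
  have level_event: "{\<omega>\<in>space M. X \<omega> \<le> c} \<in> events" for c
    by measurable
  note level_integrable = expectation_indicator_event(1)[OF level_event]
  note level_expectation = expectation_indicator_event(2)[OF level_event]
  show "integrable M (\<lambda>\<omega>. BY_weight K \<alpha> (X \<omega>))"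
    unfolding BY_weight_def using level_integrable
    by (intro Bochner_Integration.integrable_add Bochner_Integration.integrable_sum integrable_mult_right) auto
  have "expectation (\<lambda>\<omega>. BY_weight K \<alpha> (X \<omega>))
      = (\<Sum>s=1..K. (1 / real s - 1 / real (s + 1)) * prob {\<omega>\<in>space M. X \<omega> \<le> \<alpha> * real s / real K})
        + 1 / real (K + 1) * prob {\<omega>\<in>space M. X \<omega> \<le> \<alpha>}"
    unfolding BY_weight_def using level_integrable
    by (subst Bochner_Integration.integral_add)
      (auto intro!: Bochner_Integration.integrable_sum simp: Bochner_Integration.integral_sum level_expectation)
  also have "\<dots> \<le> (\<Sum>s=1..K. (1 / real s - 1 / real (s + 1)) * (\<alpha> * real s / real K)) + 1 / real (K + 1) * \<alpha>"
  proof (intro add_mono sum_mono mult_left_mono)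
    fix s assume s: "s \<in> {1..K}"
    have "\<alpha> * real s \<le> real s"
      using assms(3,4) by (intro mult_left_le_one_le) auto
    also have "\<dots> \<le> real K"
      using s by simp
    finally have "\<alpha> * real s \<le> real K" .
    then show "prob {\<omega>\<in>space M. X \<omega> \<le> \<alpha> * real s / real K} \<le> \<alpha> * real s / real K"
      using assms(3,5) by (intro superuniform) (auto simp: divide_le_eq)
    show "0 \<le> 1 / real s - 1 / real (s + 1)"
      using s by (simp add: field_simps)
  qed (use assms superuniform in auto)
  also have "\<dots> = \<alpha> / real K * (\<Sum>s=1..K. 1 / real s)"
    using assms(5) by (rule BY_threshold_sum_eq)
  finally show "expectation (\<lambda>\<omega>. BY_weight K \<alpha> (X \<omega>)) \<le> \<alpha> / real K * (\<Sum>s=1..K. 1 / real s)" .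
qed

lemma max_null_fdp_le_sum_BY_weight:
  fixes p :: "'n::finite \<Rightarrow> real"
  assumes "0 < \<alpha>"
  shows "max_null_fdp \<alpha> N p \<le> (\<Sum>j\<in>N. BY_weight CARD('n) \<alpha> (p j))"
proof -
  obtain r where r: "r \<in> {1..CARD('n)}"
    "max_null_fdp \<alpha> N p = min 1 (real (card {j\<in>N. p j \<le> \<alpha> * real r / real CARD('n)}) / real r)"
    by (rule max_null_fdp_attained)
  then have "max_null_fdp \<alpha> N p \<le> real (card {j\<in>N. p j \<le> \<alpha> * real r / real CARD('n)}) / real r"
    by simp
  also have "\<dots> = (\<Sum>j\<in>N. (if p j \<le> \<alpha> * real r / real CARD('n) then 1 else 0) / real r)"
    by (simp add: card_filter_eq_sum_indicator sum_divide_distrib)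
  also have "\<dots> \<le> (\<Sum>j\<in>N. BY_weight CARD('n) \<alpha> (p j))"
    using r assms by (intro sum_mono BY_weight_ge) auto
  finally show ?thesis .
qed

locale null_p_values = prob_space M for M :: "'a measure" +
  fixes N :: "'n::finite set" and P :: "'n \<Rightarrow> 'a \<Rightarrow> real"
  assumes measurable_P [measurable]: "\<And>i. P i \<in> borel_measurable M"
    and superuniform: "\<And>i t. i \<in> N \<Longrightarrow> 0 \<le> t \<Longrightarrow> t \<le> 1 \<Longrightarrow> prob {\<omega>\<in>space M. P i \<omega> \<le> t} \<le> t"
begin

lemma expectation_max_null_fdp_le_harmonic:
  assumes "0 < \<alpha>" "\<alpha> < 1"
  shows "expectation (\<lambda>\<omega>. max_null_fdp \<alpha> N (\<lambda>j. P j \<omega>)) \<le> \<alpha> * (\<Sum>k=1..CARD('n). 1 / real k)"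
proof -
  define K where "K = CARD('n)"
  have K: "0 < K"
    by (simp add: K_def)
  have BY_integrable: "integrable M (\<lambda>\<omega>. BY_weight K \<alpha> (P j \<omega>))"
    and BY_expectation: "expectation (\<lambda>\<omega>. BY_weight K \<alpha> (P j \<omega>)) \<le> \<alpha> / real K * (\<Sum>s=1..K. 1 / real s)"
    if "j \<in> N" for j
    using expectation_BY_weight_le[OF measurable_P superuniform[OF that] assms K] by auto
  have "expectation (\<lambda>\<omega>. max_null_fdp \<alpha> N (\<lambda>j. P j \<omega>))
      \<le> expectation (\<lambda>\<omega>. \<Sum>j\<in>N. BY_weight K \<alpha> (P j \<omega>))"
    using BY_integrable assms unfolding K_def
    by (intro integral_mono' Bochner_Integration.integrable_sum max_null_fdp_le_sum_BY_weight sum_nonneg BY_weight_nonneg) auto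
  also have "\<dots> = (\<Sum>j\<in>N. expectation (\<lambda>\<omega>. BY_weight K \<alpha> (P j \<omega>)))"
    using BY_integrable by (intro Bochner_Integration.integral_sum) auto
  also have "\<dots> \<le> (\<Sum>j\<in>N. \<alpha> / real K * (\<Sum>s=1..K. 1 / real s))"
    using BY_expectation by (intro sum_mono) auto
  also have "\<dots> = real (card N) * (\<alpha> / real K * (\<Sum>s=1..K. 1 / real s))"
    by simp
  also have "\<dots> \<le> real K * (\<alpha> / real K * (\<Sum>s=1..K. 1 / real s))"
    unfolding K_def using assms by (intro mult_right_mono mult_nonneg_nonneg sum_nonneg) (auto simp: card_mono)
  also have "\<dots> = \<alpha> * (\<Sum>s=1..K. 1 / real s)"
    by (simp add: K_def)
  finally show ?thesis
    by (simp add: K_def)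
qed

end

section \<open>Independence implies PRDN\<close>

lemma upclosed_measure_le_ratio:
  fixes g :: "'a \<Rightarrow> real"
  assumes "prob_space M" and [measurable]: "g \<in> borel_measurable M"
    and U: "U \<subseteq> space M" "\<And>p q. p \<in> U \<Longrightarrow> q \<in> space M \<Longrightarrow> g p \<le> g q \<Longrightarrow> q \<in> U"
    and "{p\<in>U. g p \<le> x} \<in> sets M" and "x \<le> z"
  shows "measure M {p\<in>U. g p \<le> x} * measure M {p\<in>space M. g p \<le> z}
    \<le> measure M {p\<in>U. g p \<le> z} * measure M {p\<in>space M. g p \<le> x}"
proof (cases "{p\<in>U. g p \<le> x} = {}")
  case False
  interpret prob_space M by fact
  define between where "between = {p\<in>space M. x < g p \<and> g p \<le> z}"
  have events: "{p\<in>space M. g p \<le> x} \<in> events" "between \<in> events"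
    unfolding between_def by measurable
  have "between \<subseteq> U"
    using False U(2) unfolding between_def by force
  then have "{p\<in>U. g p \<le> z} = {p\<in>U. g p \<le> x} \<union> between"
    using U(1) assms(6) unfolding between_def by auto
  then have U_z: "prob {p\<in>U. g p \<le> z} = prob {p\<in>U. g p \<le> x} + prob between"
    using assms(5) events by (simp add: finite_measure_Union disjoint_iff between_def)
  have z_split: "{p\<in>space M. g p \<le> z} = {p\<in>space M. g p \<le> x} \<union> between"
    using assms(6) unfolding between_def by auto
  have z: "prob {p\<in>space M. g p \<le> z} = prob {p\<in>space M. g p \<le> x} + prob between"
    unfolding z_split using events by (subst finite_measure_Union) (auto simp: between_def)
  have "prob {p\<in>U. g p \<le> x} * prob between \<le> prob {p\<in>space M. g p \<le> x} * prob between"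
    using events U(1) by (intro mult_right_mono finite_measure_mono) auto
  then show ?thesis
    unfolding U_z z by (simp add: algebra_simps)
next
  case True
  then show ?thesis
    unfolding True by simp
qed

lemma pair_upclosed_sections_ratio:
  fixes g :: "'a \<Rightarrow> real"
  assumes "prob_space M1" "prob_space M2" and [measurable]: "g \<in> borel_measurable M1"
    and S: "S \<in> sets (M1 \<Otimes>\<^sub>M M2)"
    and upclosed: "\<And>v p q. v \<in> space M2 \<Longrightarrow> (p, v) \<in> S \<Longrightarrow> q \<in> space M1 \<Longrightarrow> g p \<le> g q \<Longrightarrow> (q, v) \<in> S"
    and "x \<le> z"
  shows "measure (M1 \<Otimes>\<^sub>M M2) {pv\<in>S. g (fst pv) \<le> x} * measure M1 {p\<in>space M1. g p \<le> z}
    \<le> measure (M1 \<Otimes>\<^sub>M M2) {pv\<in>S. g (fst pv) \<le> z} * measure M1 {p\<in>space M1. g p \<le> x}"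
proof -
  interpret M1: prob_space M1 by fact
  interpret pair_prob_space M1 M2
    by (simp add: assms pair_prob_space.intro pair_sigma_finite.intro prob_space_imp_sigma_finite)
  define S_le where "S_le c = {pv\<in>S. g (fst pv) \<le> c}" for c
  have S_le: "S_le c \<in> sets (M1 \<Otimes>\<^sub>M M2)" for c
  proof -
    have "S_le c = S \<inter> {pv\<in>space (M1 \<Otimes>\<^sub>M M2). g (fst pv) \<le> c}"
      using sets.sets_into_space[OF S] by (auto simp: S_le_def)
    then show ?thesis
      using S by simp
  qed
  have slice: "(\<lambda>p. (p, v)) -` S_le c = {p\<in>{p. (p, v) \<in> S}. g p \<le> c}" for v c
    by (auto simp: S_le_def)
  have pointwise: "emeasure M1 ((\<lambda>p. (p, v)) -` S_le x) * emeasure M1 {p\<in>space M1. g p \<le> z}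
      \<le> emeasure M1 ((\<lambda>p. (p, v)) -` S_le z) * emeasure M1 {p\<in>space M1. g p \<le> x}" if "v \<in> space M2" for v
  proof -
    have "{p. (p, v) \<in> S} \<subseteq> space M1"
      using sets.sets_into_space[OF S] by (auto simp: space_pair_measure)
    then have "measure M1 ((\<lambda>p. (p, v)) -` S_le x) * measure M1 {p\<in>space M1. g p \<le> z}
        \<le> measure M1 ((\<lambda>p. (p, v)) -` S_le z) * measure M1 {p\<in>space M1. g p \<le> x}"
      using upclosed[OF that] sets_Pair2[OF S_le[of x], of v] assms(6) unfolding slice
      by (intro upclosed_measure_le_ratio[OF assms(1,3)]) auto
    then show ?thesis
      unfolding M1.emeasure_eq_measure by (simp add: ennreal_mult[symmetric])
  qed
  have "emeasure (M1 \<Otimes>\<^sub>M M2) (S_le x) * emeasure M1 {p\<in>space M1. g p \<le> z}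
      = (\<integral>\<^sup>+v. emeasure M1 ((\<lambda>p. (p, v)) -` S_le x) * emeasure M1 {p\<in>space M1. g p \<le> z} \<partial>M2)"
    by (simp add: emeasure_pair_measure_alt2[OF S_le] nn_integral_multc measurable_emeasure_Pair2[OF S_le])
  also have "\<dots> \<le> (\<integral>\<^sup>+v. emeasure M1 ((\<lambda>p. (p, v)) -` S_le z) * emeasure M1 {p\<in>space M1. g p \<le> x} \<partial>M2)"
    using pointwise by (intro nn_integral_mono) auto
  also have "\<dots> = emeasure (M1 \<Otimes>\<^sub>M M2) (S_le z) * emeasure M1 {p\<in>space M1. g p \<le> x}"
    by (simp add: emeasure_pair_measure_alt2[OF S_le] nn_integral_multc measurable_emeasure_Pair2[OF S_le])
  finally show ?thesis
    by (simp add: S_le_def emeasure_eq_measure M1.emeasure_eq_measure ennreal_mult[symmetric])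
qed

lemma (in prob_space) indep_var_upclosed_ratio:
  fixes g :: "'b \<Rightarrow> real"
  assumes indep: "indep_var M1 X M2 Y" and [measurable]: "g \<in> borel_measurable M1"
    and S: "S \<in> sets (M1 \<Otimes>\<^sub>M M2)"
    and upclosed: "\<And>v p q. (p, v) \<in> S \<Longrightarrow> q \<in> space M1 \<Longrightarrow> g p \<le> g q \<Longrightarrow> (q, v) \<in> S"
    and "x \<le> z"
  shows "prob {\<omega>\<in>space M. (X \<omega>, Y \<omega>) \<in> S \<and> g (X \<omega>) \<le> x} * prob {\<omega>\<in>space M. g (X \<omega>) \<le> z}
    \<le> prob {\<omega>\<in>space M. (X \<omega>, Y \<omega>) \<in> S \<and> g (X \<omega>) \<le> z} * prob {\<omega>\<in>space M. g (X \<omega>) \<le> x}"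
proof -
  have [measurable]: "X \<in> measurable M M1" "Y \<in> measurable M M2"
    using indep_var_rv1[OF indep] indep_var_rv2[OF indep] .
  define \<mu> where "\<mu> = distr M M1 X"
  define \<nu> where "\<nu> = distr M M2 Y"
  have joint: "\<mu> \<Otimes>\<^sub>M \<nu> = distr M (M1 \<Otimes>\<^sub>M M2) (\<lambda>\<omega>. (X \<omega>, Y \<omega>))"
    using indep unfolding indep_var_distribution_eq \<mu>_def \<nu>_def by simp
  have sets_joint: "sets (\<mu> \<Otimes>\<^sub>M \<nu>) = sets (M1 \<Otimes>\<^sub>M M2)"
    by (rule sets_pair_measure_cong) (simp_all add: \<mu>_def \<nu>_def)
  have joint_event: "prob {\<omega>\<in>space M. (X \<omega>, Y \<omega>) \<in> S \<and> g (X \<omega>) \<le> c}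
      = measure (\<mu> \<Otimes>\<^sub>M \<nu>) {pv\<in>S. g (fst pv) \<le> c}" for c
  proof -
    have "{pv\<in>S. g (fst pv) \<le> c} \<in> sets (M1 \<Otimes>\<^sub>M M2)"
      using S by measurable
    moreover have "{\<omega>\<in>space M. (X \<omega>, Y \<omega>) \<in> S \<and> g (X \<omega>) \<le> c}
        = (\<lambda>\<omega>. (X \<omega>, Y \<omega>)) -` {pv\<in>S. g (fst pv) \<le> c} \<inter> space M"
      by auto
    ultimately show ?thesis
      unfolding joint by (simp add: measure_distr)
  qed
  have marginal_event: "prob {\<omega>\<in>space M. g (X \<omega>) \<le> c} = measure \<mu> {p\<in>space \<mu>. g p \<le> c}" for c
  proof -
    have "{\<omega>\<in>space M. g (X \<omega>) \<le> c} = X -` {p\<in>space M1. g p \<le> c} \<inter> space M"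
      using measurable_space[of X M M1] by auto
    then show ?thesis
      unfolding \<mu>_def by (simp add: measure_distr)
  qed
  show ?thesis
    unfolding joint_event marginal_event using S upclosed \<open>x \<le> z\<close>
    by (intro pair_upclosed_sections_ratio) (auto simp: \<mu>_def \<nu>_def prob_space_distr sets_joint)
qed

lemma measurable_update_component:
  "(\<lambda>(f, v). v(k := f k)) \<in> measurable (Pi\<^sub>M {k} M \<Otimes>\<^sub>M Pi\<^sub>M (UNIV - {k}) M) (Pi\<^sub>M UNIV M)"
proof (rule measurable_PiM_single')
  fix i
  have "(\<lambda>f. f k) \<in> measurable (Pi\<^sub>M {k} M) (M k)" "(\<lambda>v. v i) \<in> measurable (Pi\<^sub>M (UNIV - {k}) M) (M i)" if "i \<noteq> k"
    using that by (auto intro!: measurable_component_singleton)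
  then show "(\<lambda>pv. (case pv of (f, v) \<Rightarrow> v(k := f k)) i) \<in> measurable (Pi\<^sub>M {k} M \<Otimes>\<^sub>M Pi\<^sub>M (UNIV - {k}) M) (M i)"
    by (cases "i = k") (auto simp: case_prod_beta)
qed (auto simp: space_PiM space_pair_measure PiE_iff)

lemma (in prob_space) indep_vars_imp_PRDN:
  fixes P :: "'n::finite \<Rightarrow> 'a \<Rightarrow> real"
  assumes P_measurable: "\<And>i. P i \<in> borel_measurable M"
    and indep: "indep_vars (\<lambda>_. borel) P UNIV"
  shows "PRDN M N P"
  unfolding PRDN_def
proof (intro allI impI)
  fix D :: "('n \<Rightarrow> real) set" and k :: 'n and x z :: real
  assume D: "D \<in> sets (Pi\<^sub>M UNIV (\<lambda>_. borel))" and "increasing_set D"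
    and "x \<le> z" and x_pos: "0 < prob {\<omega>\<in>space M. P k \<omega> \<le> x}"
  define B where "B = UNIV - {k}"
  define M1 where "M1 = Pi\<^sub>M {k} (\<lambda>_. borel :: real measure)"
  define M2 where "M2 = Pi\<^sub>M B (\<lambda>_. borel :: real measure)"
  have indep_k: "indep_var M1 (\<lambda>\<omega>. restrict (\<lambda>i. P i \<omega>) {k}) M2 (\<lambda>\<omega>. restrict (\<lambda>i. P i \<omega>) B)"
    unfolding M1_def M2_def B_def by (rule indep_var_restrict[OF indep]) auto
  have coordinate_measurable: "(\<lambda>f. f k) \<in> borel_measurable M1"
    unfolding M1_def by (intro measurable_component_singleton) auto
  note merge_measurable = measurable_update_component[of k "\<lambda>_. borel :: real measure", folded M1_def B_def M2_def]
  define S where "S = {pv \<in> space (M1 \<Otimes>\<^sub>M M2). (case pv of (f, v) \<Rightarrow> v(k := f k)) \<in> D}"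
  have S: "S \<in> sets (M1 \<Otimes>\<^sub>M M2)"
    unfolding S_def using measurable_sets[OF merge_measurable D] by (simp add: vimage_def Int_def conj_commute)
  have S_upclosed: "(q, v) \<in> S" if "(p, v) \<in> S" "q \<in> space M1" "p k \<le> q k" for p q v
    using that \<open>increasing_set D\<close> unfolding S_def increasing_set_def
    by (auto simp: space_pair_measure)
  have event: "{\<omega>\<in>space M. (\<lambda>i. P i \<omega>) \<in> D \<and> P k \<omega> \<le> c}
      = {\<omega>\<in>space M. (restrict (\<lambda>i. P i \<omega>) {k}, restrict (\<lambda>i. P i \<omega>) B) \<in> S \<and> restrict (\<lambda>i. P i \<omega>) {k} k \<le> c}" for c
  proof (intro Collect_cong conj_cong refl)
    fix \<omega> assume "\<omega> \<in> space M"
    then have "(restrict (\<lambda>i. P i \<omega>) {k}, restrict (\<lambda>i. P i \<omega>) B) \<in> space (M1 \<Otimes>\<^sub>M M2)"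
      using measurable_space[OF measurable_Pair[OF indep_var_rv1[OF indep_k] indep_var_rv2[OF indep_k]]] by simp
    moreover have "(restrict (\<lambda>i. P i \<omega>) B)(k := restrict (\<lambda>i. P i \<omega>) {k} k) = (\<lambda>i. P i \<omega>)"
      by (auto simp: B_def)
    ultimately show "(\<lambda>i. P i \<omega>) \<in> D \<longleftrightarrow> (restrict (\<lambda>i. P i \<omega>) {k}, restrict (\<lambda>i. P i \<omega>) B) \<in> S"
      unfolding S_def by simp
  qed simp
  have "prob {\<omega>\<in>space M. (\<lambda>i. P i \<omega>) \<in> D \<and> P k \<omega> \<le> x} * prob {\<omega>\<in>space M. P k \<omega> \<le> z}
      \<le> prob {\<omega>\<in>space M. (\<lambda>i. P i \<omega>) \<in> D \<and> P k \<omega> \<le> z} * prob {\<omega>\<in>space M. P k \<omega> \<le> x}"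
    using indep_var_upclosed_ratio[OF indep_k coordinate_measurable S S_upclosed \<open>x \<le> z\<close>]
    unfolding event by simp
  moreover have "prob {\<omega>\<in>space M. P k \<omega> \<le> x} \<le> prob {\<omega>\<in>space M. P k \<omega> \<le> z}"
    using \<open>x \<le> z\<close> P_measurable by (intro finite_measure_mono) auto
  ultimately show "prob {\<omega>\<in>space M. (\<lambda>i. P i \<omega>) \<in> D \<and> P k \<omega> \<le> x} / prob {\<omega>\<in>space M. P k \<omega> \<le> x}
      \<le> prob {\<omega>\<in>space M. (\<lambda>i. P i \<omega>) \<in> D \<and> P k \<omega> \<le> z} / prob {\<omega>\<in>space M. P k \<omega> \<le> z}"
    using x_pos by (simp add: divide_simps mult.commute)
qed

section \<open>Tail bound under PRDN\<close>

lemma telescoping_ratio_sum_le_1: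
  fixes a b F t :: "nat \<Rightarrow> real"
  assumes bounds: "\<And>l. l < m \<Longrightarrow> 0 \<le> b l \<and> b l \<le> a l \<and> a l \<le> F l"
    and t: "\<And>l. l < m \<Longrightarrow> 0 < t l \<and> F l \<le> t l"
    and F_mono: "\<And>l. Suc l < m \<Longrightarrow> F l \<le> F (Suc l)"
    and ratio: "\<And>l. Suc l < m \<Longrightarrow> 0 < F l \<Longrightarrow> a (Suc l) / F (Suc l) \<le> b l / F l"
  shows "(\<Sum>l<m. (a l - b l) / t l) \<le> 1"
proof -
  define c where "c l = (if l < m then (if 0 < F l then a l / F l else 1) else 0)" for l
  have c_bounds: "0 \<le> c l \<and> c l \<le> 1" for l
    using bounds[of l] by (auto simp: c_def divide_le_eq_1)
  have step: "(a l - b l) / t l \<le> c l - c (Suc l)" if l: "l < m" for l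
  proof (cases "0 < F l")
    case False
    then have "a l = 0" "b l = 0"
      using bounds[OF l] by auto
    then show ?thesis
      using c_bounds[of "Suc l"] False l unfolding c_def by auto
  next
    case True
    have "(a l - b l) / t l \<le> a l / F l - b l / F l"
      using bounds[OF l] t[OF l] True by (simp add: diff_divide_distrib[symmetric] divide_left_mono)
    also have "\<dots> \<le> c l - c (Suc l)"
    proof (cases "Suc l < m")
      case True
      then show ?thesis
        using ratio[OF True] F_mono[OF True] \<open>0 < F l\<close> l unfolding c_def by simp
    next
      case False
      then show ?thesis
        using bounds[OF l] \<open>0 < F l\<close> l unfolding c_def by simp
    qed
    finally show ?thesis .
  qed
  have "(\<Sum>l<m. (a l - b l) / t l) \<le> (\<Sum>l<m. c l - c (Suc l))"
    using step by (intro sum_mono) auto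
  also have "\<dots> = c 0 - c m"
    by (rule sum_lessThan_telescope')
  also have "\<dots> \<le> 1"
    using c_bounds[of 0] by (simp add: c_def)
  finally show ?thesis .
qed

lemma (in prob_space) multiplicity_mult_prob_le_sum:
  assumes "finite J" and S: "S \<in> events" and S': "\<And>j. j \<in> J \<Longrightarrow> S' j \<in> events"
    and "\<And>j. j \<in> J \<Longrightarrow> S' j \<subseteq> S"
    and multiplicity: "\<And>\<omega>. \<omega> \<in> S \<Longrightarrow> c \<le> real (card {j\<in>J. \<omega> \<in> S' j})"
  shows "c * prob S \<le> (\<Sum>j\<in>J. prob (S' j))"
proof -
  have "c * indicator S \<omega> \<le> (\<Sum>j\<in>J. indicator (S' j) \<omega> :: real)" for \<omega>
    using multiplicity[of \<omega>] assms(4) card_filter_eq_sum_indicator[OF \<open>finite J\<close>, of "\<lambda>j. \<omega> \<in> S' j"]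
    by (cases "\<omega> \<in> S") (auto simp: indicator_def of_bool_def intro!: sum_nonneg)
  then have "expectation (\<lambda>\<omega>. c * indicator S \<omega>) \<le> expectation (\<lambda>\<omega>. \<Sum>j\<in>J. indicator (S' j) \<omega>)"
    using S S' by (intro integral_mono Bochner_Integration.integrable_sum integrable_mult_right integrable_real_indicator)
      (auto simp: less_top[symmetric])
  then show ?thesis
    using S S' by (subst (asm) Bochner_Integration.integral_sum) (auto simp: less_top[symmetric])
qed

definition exceedance_set :: "'n set \<Rightarrow> real \<Rightarrow> (nat \<Rightarrow> real) \<Rightarrow> nat \<Rightarrow> nat \<Rightarrow> ('n \<Rightarrow> real) set" where
  "exceedance_set N c t m l = {x. \<exists>l'. l \<le> l' \<and> l' < m \<and> c * t l' \<le> real (card {i\<in>N. x i \<le> t l'})}"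

lemma exceedance_set_sets:
  fixes N :: "'n::finite set"
  shows "exceedance_set N c t m l \<in> sets (Pi\<^sub>M UNIV (\<lambda>_. borel))"
proof -
  have "exceedance_set N c t m l = (\<Union>l'\<in>{l..<m}. {x\<in>space (Pi\<^sub>M UNIV (\<lambda>_. borel)).
      c * t l' \<le> (\<Sum>i\<in>N. if x i \<le> t l' then 1 else 0)})"
    by (auto simp: exceedance_set_def space_PiM card_filter_eq_sum_indicator)
  then show ?thesis
    by simp
qed

lemma exceedance_set_Suc_subset: "exceedance_set N c t m (Suc l) \<subseteq> exceedance_set N c t m l"
  unfolding exceedance_set_def by (auto dest: Suc_leD)

lemma exceedance_set_empty: "exceedance_set N c t m m = {}"
  by (auto simp: exceedance_set_def)

lemma exceedance_set_diff:
  assumes "x \<in> exceedance_set N c t m l - exceedance_set N c t m (Suc l)"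
  shows "c * t l \<le> real (card {i\<in>N. x i \<le> t l})"
proof -
  obtain l' where "l \<le> l'" "\<not> Suc l \<le> l'" "c * t l' \<le> real (card {i\<in>N. x i \<le> t l'})"
    using assms by (auto simp: exceedance_set_def)
  then have "l' = l"
    by simp
  then show ?thesis
    using \<open>c * t l' \<le> _\<close> by simp
qed

lemma increasing_set_Compl_exceedance_set:
  fixes N :: "'n::finite set"
  shows "increasing_set (- exceedance_set N c t m l)"
  unfolding increasing_set_def
proof (intro allI impI)
  fix x y :: "'n \<Rightarrow> real"
  assume "x \<in> - exceedance_set N c t m l" "\<forall>i. x i \<le> y i"
  moreover have "card {i\<in>N. y i \<le> s} \<le> card {i\<in>N. x i \<le> s}" for s
    using \<open>\<forall>i. x i \<le> y i\<close> by (intro card_mono) (auto intro: order_trans)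
  ultimately show "y \<in> - exceedance_set N c t m l"
    unfolding exceedance_set_def by (force intro: order_trans)
qed

context null_p_values
begin

lemma measurable_P_vector [measurable]: "(\<lambda>\<omega> i. P i \<omega>) \<in> measurable M (Pi\<^sub>M UNIV (\<lambda>_. borel))"
  by (intro measurable_PiM_single') (auto simp: space_PiM)

lemma PRDN_ratio_antimono:
  assumes PRDN: "PRDN M N P" and "j \<in> N"
    and D: "D \<in> sets (Pi\<^sub>M UNIV (\<lambda>_. borel))" "increasing_set (- D)"
    and "x \<le> y" and x_pos: "0 < prob {\<omega>\<in>space M. P j \<omega> \<le> x}"
  shows "prob {\<omega>\<in>space M. (\<lambda>i. P i \<omega>) \<in> D \<and> P j \<omega> \<le> y} / prob {\<omega>\<in>space M. P j \<omega> \<le> y}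
    \<le> prob {\<omega>\<in>space M. (\<lambda>i. P i \<omega>) \<in> D \<and> P j \<omega> \<le> x} / prob {\<omega>\<in>space M. P j \<omega> \<le> x}"
proof -
  define F where "F c = prob {\<omega>\<in>space M. P j \<omega> \<le> c}" for c
  define joint where "joint D' c = prob {\<omega>\<in>space M. (\<lambda>i. P i \<omega>) \<in> D' \<and> P j \<omega> \<le> c}" for D' c
  have complement: "joint (- D) c = F c - joint D c" for c
  proof -
    have "{\<omega>\<in>space M. (\<lambda>i. P i \<omega>) \<in> - D \<and> P j \<omega> \<le> c}
        = {\<omega>\<in>space M. P j \<omega> \<le> c} - {\<omega>\<in>space M. (\<lambda>i. P i \<omega>) \<in> D \<and> P j \<omega> \<le> c}"
      by auto
    moreover have "{\<omega>\<in>space M. (\<lambda>i. P i \<omega>) \<in> D \<and> P j \<omega> \<le> c} \<in> events"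
      using D(1) by measurable
    ultimately show ?thesis
      unfolding joint_def F_def by (subst finite_measure_Diff[symmetric]) auto
  qed
  have "- D = space (Pi\<^sub>M UNIV (\<lambda>_. borel :: real measure)) - D"
    by (auto simp: space_PiM)
  then have "- D \<in> sets (Pi\<^sub>M UNIV (\<lambda>_. borel))"
    using D(1) by auto
  then have "joint (- D) x / F x \<le> joint (- D) y / F y"
    using PRDN D(2) \<open>j \<in> N\<close> \<open>x \<le> y\<close> x_pos unfolding PRDN_def joint_def F_def by blast
  moreover have "F x \<le> F y"
    unfolding F_def using \<open>x \<le> y\<close> by (intro finite_measure_mono) auto
  ultimately show ?thesis
    using x_pos unfolding complement joint_def[symmetric] F_def[symmetric] by (simp add: diff_divide_distrib)
qed

lemma PRDN_layer_sum_le_1: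
  assumes PRDN: "PRDN M N P" and "j \<in> N"
    and D_sets: "\<And>l. D l \<in> sets (Pi\<^sub>M UNIV (\<lambda>_. borel))"
    and D_increasing: "\<And>l. increasing_set (- D l)"
    and D_Suc: "\<And>l. D (Suc l) \<subseteq> D l"
    and t: "\<And>l. l < m \<Longrightarrow> 0 < t l \<and> t l \<le> 1" and t_mono: "\<And>l. Suc l < m \<Longrightarrow> t l \<le> t (Suc l)"
  shows "(\<Sum>l<m. prob {\<omega>\<in>space M. (\<lambda>i. P i \<omega>) \<in> D l - D (Suc l) \<and> P j \<omega> \<le> t l} / t l) \<le> 1"
proof -
  define F where "F l = prob {\<omega>\<in>space M. P j \<omega> \<le> t l}" for l
  define a where "a l = prob {\<omega>\<in>space M. (\<lambda>i. P i \<omega>) \<in> D l \<and> P j \<omega> \<le> t l}" for l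
  define b where "b l = prob {\<omega>\<in>space M. (\<lambda>i. P i \<omega>) \<in> D (Suc l) \<and> P j \<omega> \<le> t l}" for l
  have events: "{\<omega>\<in>space M. (\<lambda>i. P i \<omega>) \<in> D l \<and> P j \<omega> \<le> c} \<in> events" for l c
    using D_sets[of l] by measurable
  have layer: "prob {\<omega>\<in>space M. (\<lambda>i. P i \<omega>) \<in> D l - D (Suc l) \<and> P j \<omega> \<le> t l} = a l - b l" for l
  proof -
    have "{\<omega>\<in>space M. (\<lambda>i. P i \<omega>) \<in> D l - D (Suc l) \<and> P j \<omega> \<le> t l}
        = {\<omega>\<in>space M. (\<lambda>i. P i \<omega>) \<in> D l \<and> P j \<omega> \<le> t l} - {\<omega>\<in>space M. (\<lambda>i. P i \<omega>) \<in> D (Suc l) \<and> P j \<omega> \<le> t l}"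
      by auto
    then show ?thesis
      unfolding a_def b_def using events D_Suc[of l] by (subst finite_measure_Diff[symmetric]) auto
  qed
  have "(\<Sum>l<m. (a l - b l) / t l) \<le> 1"
  proof (rule telescoping_ratio_sum_le_1)
    show "0 \<le> b l \<and> b l \<le> a l \<and> a l \<le> F l" for l
      unfolding a_def b_def F_def using events D_Suc by (auto intro!: finite_measure_mono)
    show "0 < t l \<and> F l \<le> t l" if "l < m" for l
      unfolding F_def using t[OF that] superuniform[OF \<open>j \<in> N\<close>] by auto
    show "F l \<le> F (Suc l)" if "Suc l < m" for l
      unfolding F_def using t_mono[OF that] by (intro finite_measure_mono) auto
    show "a (Suc l) / F (Suc l) \<le> b l / F l" if "Suc l < m" "0 < F l" for l
      unfolding a_def b_def F_def using D_sets D_increasing t_mono[OF that(1)] that(2)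
      by (intro PRDN_ratio_antimono[OF PRDN \<open>j \<in> N\<close>]) (auto simp: F_def)
  qed
  then show ?thesis
    unfolding layer .
qed

lemma prob_exceedance_le_PRDN:
  assumes PRDN: "PRDN M N P" and "0 < c"
    and t: "\<And>l. l < m \<Longrightarrow> 0 < t l \<and> t l \<le> 1" and t_mono: "\<And>l. Suc l < m \<Longrightarrow> t l \<le> t (Suc l)"
  shows "prob {\<omega>\<in>space M. \<exists>l<m. c * t l \<le> real (card {i\<in>N. P i \<omega> \<le> t l})} \<le> real (card N) / c"
proof -
  define A where "A l = {\<omega>\<in>space M. (\<lambda>i. P i \<omega>) \<in> exceedance_set N c t m l}" for l
  define layer where "layer l j = {\<omega>\<in>space M. (\<lambda>i. P i \<omega>) \<in> exceedance_set N c t m l - exceedance_set N c t m (Suc l)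
      \<and> P j \<omega> \<le> t l}" for l j
  have A_events: "A l \<in> events" for l
    unfolding A_def using exceedance_set_sets by measurable
  have A_Suc: "A (Suc l) \<subseteq> A l" for l
    unfolding A_def using exceedance_set_Suc_subset by blast
  have layer_events: "layer l j \<in> events" for l j
    unfolding layer_def using exceedance_set_sets by measurable
  have "{\<omega>\<in>space M. \<exists>l<m. c * t l \<le> real (card {i\<in>N. P i \<omega> \<le> t l})} = A 0"
    by (auto simp: A_def exceedance_set_def)
  also have "prob (A 0) = (\<Sum>l<m. prob (A l - A (Suc l)))"
    using sum_lessThan_telescope'[of "\<lambda>l. prob (A l)" m] A_events A_Suc
    by (simp add: A_def exceedance_set_empty finite_measure_Diff)
  also have "\<dots> \<le> (\<Sum>l<m. (1 / c) * (\<Sum>j\<in>N. prob (layer l j) / t l))"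
  proof (rule sum_mono)
    fix l assume "l \<in> {..<m}"
    then have "0 < c * t l"
      using \<open>0 < c\<close> t by simp
    moreover have "(c * t l) * prob (A l - A (Suc l)) \<le> (\<Sum>j\<in>N. prob (layer l j))"
      using A_events layer_events exceedance_set_diff[of "\<lambda>i. P i _" N c t m l]
      by (intro multiplicity_mult_prob_le_sum) (auto simp: A_def layer_def)
    ultimately have "prob (A l - A (Suc l)) \<le> (\<Sum>j\<in>N. prob (layer l j)) / (c * t l)"
      by (simp add: pos_le_divide_eq mult.commute)
    also have "\<dots> = (1 / c) * (\<Sum>j\<in>N. prob (layer l j) / t l)"
      by (simp add: sum_divide_distrib sum_distrib_left)
    finally show "prob (A l - A (Suc l)) \<le> (1 / c) * (\<Sum>j\<in>N. prob (layer l j) / t l)" .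
  qed
  also have "\<dots> = (1 / c) * (\<Sum>j\<in>N. \<Sum>l<m. prob (layer l j) / t l)"
    by (simp add: sum_distrib_left sum.swap[of _ N])
  also have "\<dots> \<le> (1 / c) * (\<Sum>j\<in>N. 1)"
    unfolding layer_def using \<open>0 < c\<close> t t_mono exceedance_set_sets increasing_set_Compl_exceedance_set
    by (intro mult_left_mono sum_mono PRDN_layer_sum_le_1[OF PRDN] exceedance_set_Suc_subset) auto
  finally show ?thesis
    by simp
qed

lemma prob_max_null_fdp_ge_le_PRDN:
  assumes PRDN: "PRDN M N P" and "0 < \<alpha>" "\<alpha> < 1" "0 < b"
  shows "prob {\<omega>\<in>space M. b \<le> max_null_fdp \<alpha> N (\<lambda>j. P j \<omega>)} \<le> \<alpha> / b"
proof -
  define K where "K = CARD('n)"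
  define t where "t l = \<alpha> * real (Suc l) / real K" for l
  define c where "c = b * real K / \<alpha>"
  have K: "0 < K"
    by (simp add: K_def)
  have t: "0 < t l \<and> t l \<le> 1" if "l < K" for l
  proof -
    have "\<alpha> * real (Suc l) \<le> 1 * real K"
      using that assms(2,3) by (intro mult_mono) auto
    then show ?thesis
      using K assms(2) by (simp add: t_def divide_le_eq)
  qed
  have "{\<omega>\<in>space M. b \<le> max_null_fdp \<alpha> N (\<lambda>j. P j \<omega>)}
      \<subseteq> {\<omega>\<in>space M. \<exists>l<K. c * t l \<le> real (card {i\<in>N. P i \<omega> \<le> t l})}"
  proof safe
    fix \<omega> assume "b \<le> max_null_fdp \<alpha> N (\<lambda>j. P j \<omega>)"
    then obtain r where r: "r \<in> {1..K}" "b * real r \<le> real (card {j\<in>N. P j \<omega> \<le> \<alpha> * real r / real K})"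
      unfolding K_def by (rule max_null_fdp_geD)
    moreover have "c * t (r - 1) = b * real r" "t (r - 1) = \<alpha> * real r / real K"
      using r(1) K assms(2) by (auto simp: c_def t_def)
    ultimately show "\<exists>l<K. c * t l \<le> real (card {i\<in>N. P i \<omega> \<le> t l})"
      by (intro exI[of _ "r - 1"]) auto
  qed
  then have "prob {\<omega>\<in>space M. b \<le> max_null_fdp \<alpha> N (\<lambda>j. P j \<omega>)}
      \<le> prob {\<omega>\<in>space M. \<exists>l<K. c * t l \<le> real (card {i\<in>N. P i \<omega> \<le> t l})}"
    by (intro finite_measure_mono) (auto simp: card_filter_eq_sum_indicator)
  also have "\<dots> \<le> real (card N) / c"
    using t assms K by (intro prob_exceedance_le_PRDN[OF PRDN]) (auto simp: c_def t_def field_simps)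
  also have "\<dots> \<le> real K / c"
    using assms K by (intro divide_right_mono) (auto simp: c_def K_def card_mono)
  also have "\<dots> = \<alpha> / b"
    using assms K by (simp add: c_def)
  finally show ?thesis .
qed

lemma expectation_max_null_fdp_le_PRDN:
  assumes "PRDN M N P" and "0 < \<alpha>" "\<alpha> < 1"
  shows "expectation (\<lambda>\<omega>. max_null_fdp \<alpha> N (\<lambda>j. P j \<omega>)) \<le> \<alpha> * (1 + ln (1 / \<alpha>))"
proof -
  have "expectation (\<lambda>\<omega>. max_null_fdp \<alpha> N (\<lambda>j. P j \<omega>)) \<le> \<alpha> * tail_primitive 1 1 (1 / \<alpha>)"
  proof (rule expectation_le_tail_primitive)
    show "prob {\<omega>\<in>space M. b \<le> max_null_fdp \<alpha> N (\<lambda>j. P j \<omega>)} \<le> tail_bound 1 (b / \<alpha>)" if "0 < b" for b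
      using prob_max_null_fdp_ge_le_PRDN[OF assms that] by (simp add: tail_bound_def)
  qed (use assms in \<open>auto simp: max_null_fdp_nonneg max_null_fdp_le_1\<close>)
  then show ?thesis
    using assms by (simp add: tail_primitive_def)
qed

end

section \<open>Tail bound under WNDN\<close>

lemma max_null_fdp_ge_imp_count:
  fixes p :: "'n::finite \<Rightarrow> real"
  assumes "b \<le> max_null_fdp \<alpha> N p" "0 < b" "0 \<le> \<alpha>"
  obtains k where "k \<in> {1..CARD('n)}"
    "k \<le> card {i\<in>N. p i \<le> \<alpha> * real (min CARD('n) (nat \<lfloor>real k / b\<rfloor>)) / real CARD('n)}"
proof -
  define K where "K = CARD('n)"
  obtain r where r: "r \<in> {1..K}" "b * real r \<le> real (card {j\<in>N. p j \<le> \<alpha> * real r / real K})"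
    using assms(1) unfolding K_def by (rule max_null_fdp_geD)
  define k where "k = nat \<lceil>b * real r\<rceil>"
  have "0 < b * real r"
    using assms(2) r(1) by simp
  then have k: "1 \<le> k" "b * real r \<le> real k"
    unfolding k_def by linarith+
  have "k \<le> card {j\<in>N. p j \<le> \<alpha> * real r / real K}"
    using r(2) unfolding k_def by (simp add: nat_le_iff ceiling_le)
  also have "\<dots> \<le> card {i\<in>N. p i \<le> \<alpha> * real (min K (nat \<lfloor>real k / b\<rfloor>)) / real K}"
  proof -
    have "real r \<le> real k / b"
      using k assms(2) by (simp add: field_simps)
    then have "r \<le> min K (nat \<lfloor>real k / b\<rfloor>)"
      using r(1) by (simp add: le_nat_floor le_floor_iff)
    then have "\<alpha> * real r / real K \<le> \<alpha> * real (min K (nat \<lfloor>real k / b\<rfloor>)) / real K"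
      using assms(3) by (intro divide_right_mono mult_left_mono) auto
    then show ?thesis
      by (intro card_mono) auto
  qed
  finally have "k \<le> card {i\<in>N. p i \<le> \<alpha> * real (min K (nat \<lfloor>real k / b\<rfloor>)) / real K}" .
  moreover have "card {i\<in>N. p i \<le> \<alpha> * real (min K (nat \<lfloor>real k / b\<rfloor>)) / real K} \<le> K"
    unfolding K_def by (rule card_mono) auto
  ultimately show ?thesis
    using that[of k] k(1) unfolding K_def by simp
qed

lemma binomial_mult_power_le:
  fixes s :: real
  assumes "0 \<le> s"
  shows "real (n choose k) * s ^ k \<le> (real n * s) ^ k / fact k"
proof -
  have "real (n choose k) * fact k \<le> real n ^ k"
    using binomial_fact_pow[of n k] by (metis of_nat_fact of_nat_le_iff of_nat_mult of_nat_power)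
  then have "real (n choose k) * fact k * s ^ k \<le> real n ^ k * s ^ k"
    using assms by (intro mult_right_mono) auto
  then show ?thesis
    by (simp add: field_simps power_mult_distrib)
qed

context null_p_values
begin

lemma count_event [measurable]: "{\<omega>\<in>space M. k \<le> card {i\<in>N. P i \<omega> \<le> c}} \<in> events"
proof -
  have "{\<omega>\<in>space M. k \<le> card {i\<in>N. P i \<omega> \<le> c}} = {\<omega>\<in>space M. real k \<le> (\<Sum>i\<in>N. if P i \<omega> \<le> c then 1 else 0)}"
    by (simp flip: card_filter_eq_sum_indicator)
  then show ?thesis
    by simp
qed

lemma prob_card_ge_le_WNDN:
  assumes WNDN: "WNDN M N P" and "0 \<le> s" "s \<le> 1"
  shows "prob {\<omega>\<in>space M. k \<le> card {i\<in>N. P i \<omega> \<le> s}} \<le> real (card N choose k) * s ^ k"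
proof -
  define subsets where "subsets = {A. A \<subseteq> N \<and> card A = k}"
  have events: "{\<omega>\<in>space M. \<forall>i\<in>A. P i \<omega> \<le> s} \<in> events" for A
    by (intro sets.sets_Collect_finite_All) auto
  have "{\<omega>\<in>space M. k \<le> card {i\<in>N. P i \<omega> \<le> s}} \<subseteq> (\<Union>A\<in>subsets. {\<omega>\<in>space M. \<forall>i\<in>A. P i \<omega> \<le> s})"
  proof safe
    fix \<omega> assume "\<omega> \<in> space M" "k \<le> card {i\<in>N. P i \<omega> \<le> s}"
    moreover obtain A where "A \<subseteq> {i\<in>N. P i \<omega> \<le> s}" "card A = k"
      using obtain_subset_with_card_n[OF \<open>k \<le> card _\<close>] by metis
    ultimately show "\<omega> \<in> (\<Union>A\<in>subsets. {\<omega>\<in>space M. \<forall>i\<in>A. P i \<omega> \<le> s})"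
      unfolding subsets_def by auto
  qed
  then have "prob {\<omega>\<in>space M. k \<le> card {i\<in>N. P i \<omega> \<le> s}} \<le> prob (\<Union>A\<in>subsets. {\<omega>\<in>space M. \<forall>i\<in>A. P i \<omega> \<le> s})"
    using events by (intro finite_measure_mono) (auto simp: subsets_def)
  also have "\<dots> \<le> (\<Sum>A\<in>subsets. prob {\<omega>\<in>space M. \<forall>i\<in>A. P i \<omega> \<le> s})"
    using events by (intro finite_measure_subadditive_finite) (auto simp: subsets_def)
  also have "\<dots> \<le> (\<Sum>A\<in>subsets. s ^ k)"
  proof (rule sum_mono)
    fix A assume "A \<in> subsets"
    then have "A \<subseteq> N" "card A = k"
      by (auto simp: subsets_def)
    then have "prob {\<omega>\<in>space M. \<forall>i\<in>A. P i \<omega> \<le> s} \<le> (\<Prod>i\<in>A. prob {\<omega>\<in>space M. P i \<omega> \<le> s})"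
      using WNDN assms(2,3) unfolding WNDN_def by auto
    also have "\<dots> \<le> (\<Prod>i\<in>A. s)"
      using \<open>A \<subseteq> N\<close> assms(2,3) superuniform by (intro prod_mono) auto
    finally show "prob {\<omega>\<in>space M. \<forall>i\<in>A. P i \<omega> \<le> s} \<le> s ^ k"
      using \<open>card A = k\<close> by simp
  qed
  also have "\<dots> = real (card N choose k) * s ^ k"
    by (simp add: subsets_def n_subsets)
  finally show ?thesis .
qed

lemma prob_max_null_fdp_ge_le_WNDN:
  assumes WNDN: "WNDN M N P" and "0 < \<alpha>" "\<alpha> < 1" "0 < b"
  shows "prob {\<omega>\<in>space M. b \<le> max_null_fdp \<alpha> N (\<lambda>j. P j \<omega>)} \<le> tail_bound CARD('n) (b / \<alpha>)"
proof -
  define K where "K = CARD('n)"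
  define s where "s k = \<alpha> * real (min K (nat \<lfloor>real k / b\<rfloor>)) / real K" for k
  have K: "0 < K" "card N \<le> K"
    by (simp_all add: K_def card_mono)
  have s: "0 \<le> s k \<and> s k \<le> 1" for k
  proof -
    have "\<alpha> * real (min K (nat \<lfloor>real k / b\<rfloor>)) \<le> 1 * real K"
      using assms(2,3) by (intro mult_mono) auto
    then show ?thesis
      using assms(2) K by (simp add: s_def divide_le_eq)
  qed
  have "{\<omega>\<in>space M. b \<le> max_null_fdp \<alpha> N (\<lambda>j. P j \<omega>)} \<subseteq> (\<Union>k\<in>{1..K}. {\<omega>\<in>space M. k \<le> card {i\<in>N. P i \<omega> \<le> s k}})"
  proof safe
    fix \<omega> assume "\<omega> \<in> space M" "b \<le> max_null_fdp \<alpha> N (\<lambda>j. P j \<omega>)"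
    moreover obtain k where "k \<in> {1..K}" "k \<le> card {i\<in>N. P i \<omega> \<le> s k}"
      using max_null_fdp_ge_imp_count[OF \<open>b \<le> _\<close>] assms(2,4) unfolding K_def s_def by auto
    ultimately show "\<omega> \<in> (\<Union>k\<in>{1..K}. {\<omega>\<in>space M. k \<le> card {i\<in>N. P i \<omega> \<le> s k}})"
      by auto
  qed
  then have "prob {\<omega>\<in>space M. b \<le> max_null_fdp \<alpha> N (\<lambda>j. P j \<omega>)}
      \<le> (\<Sum>k\<in>{1..K}. prob {\<omega>\<in>space M. k \<le> card {i\<in>N. P i \<omega> \<le> s k}})"
    by (intro order_trans[OF finite_measure_mono finite_measure_subadditive_finite]) auto
  also have "\<dots> \<le> (\<Sum>k\<in>{1..K}. (real k / (b / \<alpha>)) ^ k / fact k)"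
  proof (rule sum_mono)
    fix k
    have "real (nat \<lfloor>real k / b\<rfloor>) \<le> real k / b"
      using assms(4) by (simp add: of_nat_floor)
    then have "\<alpha> * real (min K (nat \<lfloor>real k / b\<rfloor>)) \<le> \<alpha> * (real k / b)"
      using assms(2) by (intro mult_left_mono) (auto simp: of_nat_min)
    then have Ks: "real K * s k \<le> real k / (b / \<alpha>)"
      using K by (simp add: s_def mult.commute)
    have "prob {\<omega>\<in>space M. k \<le> card {i\<in>N. P i \<omega> \<le> s k}} \<le> real (card N choose k) * s k ^ k"
      using s[of k] by (intro prob_card_ge_le_WNDN[OF WNDN]) auto
    also have "\<dots> \<le> (real (card N) * s k) ^ k / fact k"
      using s[of k] by (intro binomial_mult_power_le) auto
    also have "\<dots> \<le> (real k / (b / \<alpha>)) ^ k / fact k"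
      using K s[of k] Ks by (intro divide_right_mono power_mono order_trans[OF mult_right_mono Ks]) auto
    finally show "prob {\<omega>\<in>space M. k \<le> card {i\<in>N. P i \<omega> \<le> s k}} \<le> (real k / (b / \<alpha>)) ^ k / fact k" .
  qed
  finally show ?thesis
    by (simp add: tail_bound_def K_def)
qed

end

lemma (in null_p_values) expectation_max_null_fdp_le_WNDN:
  assumes "WNDN M N P" and "0 < \<alpha>" "\<alpha> < 1"
  shows "expectation (\<lambda>\<omega>. max_null_fdp \<alpha> N (\<lambda>j. P j \<omega>)) \<le> \<alpha> * (318 / 100 + ln (1 / \<alpha>))"
proof -
  have "expectation (\<lambda>\<omega>. max_null_fdp \<alpha> N (\<lambda>j. P j \<omega>)) \<le> \<alpha> * tail_primitive (10 / 3) CARD('n) (1 / \<alpha>)"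
    using prob_max_null_fdp_ge_le_WNDN[OF assms] assms(2)
    by (intro expectation_le_tail_primitive) (auto simp: max_null_fdp_nonneg max_null_fdp_le_1)
  also have "\<dots> \<le> \<alpha> * (318 / 100 + ln (1 / \<alpha>))"
    using assms by (intro mult_left_mono tail_primitive_10_div_3_le) auto
  finally show ?thesis .
qed

theorem theorem3:
  fixes M :: "'a measure" and N :: "'n::finite set" and \<alpha> :: real
    and E F :: "'n \<Rightarrow> 'a \<Rightarrow> real" and SE :: "('n \<Rightarrow> real) \<Rightarrow> 'n set"
    and P Q :: "'n \<Rightarrow> 'a \<Rightarrow> real" and SP :: "('n \<Rightarrow> real) \<Rightarrow> 'n set"
  assumes M: "prob_space M"
    and alpha: "0 < \<alpha>" "\<alpha> < 1"
    \<comment> \<open>part (i): e-values and proxies\<close>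
    and E_meas: "\<And>i. E i \<in> borel_measurable M"
    and E_nonneg: "\<And>i \<omega>. \<omega> \<in> space M \<Longrightarrow> 0 \<le> E i \<omega>"
    and E_valid: "\<And>i. i \<in> N \<Longrightarrow> (\<integral>\<^sup>+ \<omega>. ennreal (E i \<omega>) \<partial>M) \<le> 1"
    and F_nonneg: "\<And>i \<omega>. \<omega> \<in> space M \<Longrightarrow> 0 \<le> F i \<omega>"
    and SE_meas: "\<And>i. {\<omega> \<in> space M. i \<in> SE (\<lambda>j. F j \<omega>)} \<in> sets M"
    \<comment> \<open>part (ii): p-values and proxies\<close>
    and P_meas: "\<And>i. P i \<in> borel_measurable M"
    and P_valid: "\<And>i t. i \<in> N \<Longrightarrow> 0 \<le> t \<Longrightarrow> t \<le> 1 \<Longrightarrow>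
                    measure M {\<omega> \<in> space M. P i \<omega> \<le> t} \<le> t"
    and Q_range: "\<And>i \<omega>. \<omega> \<in> space M \<Longrightarrow> 0 \<le> Q i \<omega> \<and> Q i \<omega> \<le> 1"
    and SP_meas: "\<And>i. {\<omega> \<in> space M. i \<in> SP (\<lambda>j. Q j \<omega>)} \<in> sets M"
  shows
    "FDR M N (\<lambda>\<omega>. eBH \<alpha> (\<lambda>i. E i \<omega> * (if i \<in> SE (\<lambda>j. F j \<omega>) then 1 else 0))) \<le> \<alpha>
     \<and> ((prob_space.indep_vars M (\<lambda>_. borel) P UNIV \<or> PRDN M N P) \<longrightarrow>
          FDR M N (\<lambda>\<omega>. BH \<alpha> (\<lambda>i. max (P i \<omega>) (if i \<notin> SP (\<lambda>j. Q j \<omega>) then 1 else 0)))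
            \<le> \<alpha> * (1 + ln (1 / \<alpha>)))
     \<and> (WNDN M N P \<longrightarrow>
          FDR M N (\<lambda>\<omega>. BH \<alpha> (\<lambda>i. max (P i \<omega>) (if i \<notin> SP (\<lambda>j. Q j \<omega>) then 1 else 0)))
            \<le> \<alpha> * (3.18 + ln (1 / \<alpha>)))
     \<and> FDR M N (\<lambda>\<omega>. BH \<alpha> (\<lambda>i. max (P i \<omega>) (if i \<notin> SP (\<lambda>j. Q j \<omega>) then 1 else 0)))
            \<le> \<alpha> * (\<Sum>k = 1..CARD('n). 1 / real k)"
proof -
  interpret null_p_values M N P
    using M P_meas P_valid by (simp add: null_p_values_def null_p_values_axioms_def)
  define W where "W \<omega> = max_null_fdp \<alpha> N (\<lambda>j. P j \<omega>)" for \<omega>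
  have "FDR M N (\<lambda>\<omega>. eBH \<alpha> (\<lambda>i. E i \<omega> * (if i \<in> SE (\<lambda>j. F j \<omega>) then 1 else 0)))
      \<le> \<alpha> * real (card N) / real CARD('n)"
    using alpha E_meas E_valid E_nonneg by (intro FDR_eBH_le) auto
  also have "\<dots> \<le> \<alpha>"
    using alpha by (simp add: divide_le_eq card_mono)
  moreover have "FDR M N (\<lambda>\<omega>. BH \<alpha> (\<lambda>i. max (P i \<omega>) (if i \<notin> SP (\<lambda>j. Q j \<omega>) then 1 else 0)))
      \<le> expectation W"
    unfolding W_def using alpha by (intro FDR_BH_le_expectation_max_null_fdp) auto
  moreover have "indep_vars (\<lambda>_. borel) P UNIV \<or> PRDN M N P \<longrightarrow> expectation W \<le> \<alpha> * (1 + ln (1 / \<alpha>))"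
    unfolding W_def using indep_vars_imp_PRDN[of P N] measurable_P expectation_max_null_fdp_le_PRDN[OF _ alpha]
    by blast
  moreover have "WNDN M N P \<longrightarrow> expectation W \<le> \<alpha> * (3.18 + ln (1 / \<alpha>))"
    unfolding W_def using expectation_max_null_fdp_le_WNDN[OF _ alpha] by simp
  moreover have "expectation W \<le> \<alpha> * (\<Sum>k = 1..CARD('n). 1 / real k)"
    unfolding W_def using alpha by (rule expectation_max_null_fdp_le_harmonic)
  ultimately show ?thesis
    by (meson order_trans)
qed

end
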